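(* Let $G$ be a finite group, $K$ a field of characteristic $0$ which is a splitting field for $G$ and all of its subgroups, and $N$ a normal subgroup of $G$ containing the commutator subgroup $G'$. Let $\chi$ be an irreducible character of $G$, $\eta$ an irreducible constituent of $\mathrm{res}^G_N\chi$, and $G_\eta=\{g\in G:{}^g\eta=\eta\}$. Write $\mathrm{ind}_N^{G_\eta}\eta=\sum_{i=1}^s m_i\psi_i$ with positive integers $m_i$ and pairwise distinct irreducible characters $\psi_i$ of $G_\eta$, numbered so that $\mathrm{ind}_{G_\eta}^G\psi_1=\chi$, and put $\psi:=\psi_1$, $m:=m_1$. Then: (i) each $\psi_i$ is of the form $\psi\otimes\omega_i$ for some $\omega_i\in\mathrm{Irr}(G_\eta/N)$; (ii) each $\psi\otimes\omega$ with $\omega\in\mathrm{Irr}(G_\eta/N)$ equals some $\psi_i$; (iii) $m_i=m$ for all $1\le i\le s$, and $[G_\eta:N]=sm^2$.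
   Context: $G$ acts on characters of $N$ by ${}^g\eta(x)=\eta(g^{-1}xg)$. $\mathrm{res}$ and $\mathrm{ind}$ denote restriction and induction of characters. Characters of $G_\eta/N$ are viewed as characters of $G_\eta$ by inflation. (By Clifford theory, the irreducible characters of $G$ whose restriction to $N$ contains $\eta$ are exactly the $\mathrm{ind}_{G_\eta}^G\psi_i$, which are irreducible, so exactly one index satisfies $\mathrm{ind}_{G_\eta}^G\psi_i=\chi$.) *)

theory Defs
  imports "HOL-Algebra.Algebra" "Jordan_Normal_Form.Matrix"
begin

definition mat_tr :: "'k::comm_ring_1 mat \<Rightarrow> 'k" where
  "mat_tr A = (\<Sum>i<dim_row A. A $$ (i, i))"

definition is_rep :: "('g, 'b) monoid_scheme \<Rightarrow> nat \<Rightarrow> ('g \<Rightarrow> 'k::field mat) \<Rightarrow> bool" where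
  "is_rep H n \<rho> \<longleftrightarrow>
     (\<forall>h\<in>carrier H. \<rho> h \<in> carrier_mat n n) \<and>
     (\<forall>h\<in>carrier H. \<forall>k\<in>carrier H. \<rho> (h \<otimes>\<^bsub>H\<^esub> k) = \<rho> h * \<rho> k) \<and>
     \<rho> \<one>\<^bsub>H\<^esub> = 1\<^sub>m n"

definition rep_invariant_subspace ::
  "('g, 'b) monoid_scheme \<Rightarrow> nat \<Rightarrow> ('g \<Rightarrow> 'k::field mat) \<Rightarrow> 'k vec set \<Rightarrow> bool" where
  "rep_invariant_subspace H n \<rho> W \<longleftrightarrow>
     W \<subseteq> carrier_vec n \<and> 0\<^sub>v n \<in> W \<and>
     (\<forall>v\<in>W. \<forall>w\<in>W. v + w \<in> W) \<and>
     (\<forall>c. \<forall>v\<in>W. c \<cdot>\<^sub>v v \<in> W) \<and>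
     (\<forall>h\<in>carrier H. \<forall>v\<in>W. \<rho> h *\<^sub>v v \<in> W)"

definition irr_rep :: "('g, 'b) monoid_scheme \<Rightarrow> nat \<Rightarrow> ('g \<Rightarrow> 'k::field mat) \<Rightarrow> bool" where
  "irr_rep H n \<rho> \<longleftrightarrow> is_rep H n \<rho> \<and> n > 0 \<and>
     (\<forall>W. rep_invariant_subspace H n \<rho> W \<longrightarrow> W = {0\<^sub>v n} \<or> W = carrier_vec n)"

definition char_of :: "('g, 'b) monoid_scheme \<Rightarrow> ('g \<Rightarrow> 'k::field mat) \<Rightarrow> 'g \<Rightarrow> 'k" where
  "char_of H \<rho> = (\<lambda>h. if h \<in> carrier H then mat_tr (\<rho> h) else 0)"

text \<open>K-characters (degree 0 allowed, giving the zero function) and irreducible K-characters.\<close>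
definition is_character :: "('g, 'b) monoid_scheme \<Rightarrow> ('g \<Rightarrow> 'k::field) \<Rightarrow> bool" where
  "is_character H \<phi> \<longleftrightarrow> (\<exists>n (\<rho> :: 'g \<Rightarrow> 'k mat). is_rep H n \<rho> \<and> \<phi> = char_of H \<rho>)"

definition irr_char :: "('g, 'b) monoid_scheme \<Rightarrow> ('g \<Rightarrow> 'k::field) \<Rightarrow> bool" where
  "irr_char H \<phi> \<longleftrightarrow> (\<exists>n (\<rho> :: 'g \<Rightarrow> 'k mat). irr_rep H n \<rho> \<and> \<phi> = char_of H \<rho>)"

definition constituent :: "('g, 'b) monoid_scheme \<Rightarrow> ('g \<Rightarrow> 'k::field) \<Rightarrow> ('g \<Rightarrow> 'k) \<Rightarrow> bool" where
  "constituent H \<eta> \<phi> \<longleftrightarrow> is_character H (\<lambda>h. \<phi> h - \<eta> h)"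

text \<open>K is a splitting field for H: every irreducible K-representation of H is absolutely
  irreducible, i.e. its commuting algebra (endomorphism ring) consists of the scalars only.\<close>
definition splitting_field :: "'k::field itself \<Rightarrow> ('g, 'b) monoid_scheme \<Rightarrow> bool" where
  "splitting_field _ H \<longleftrightarrow>
     (\<forall>n (\<rho> :: 'g \<Rightarrow> 'k mat). irr_rep H n \<rho> \<longrightarrow>
        (\<forall>A \<in> carrier_mat n n. (\<forall>h\<in>carrier H. A * \<rho> h = \<rho> h * A) \<longrightarrow>
           (\<exists>c. A = c \<cdot>\<^sub>m 1\<^sub>m n)))"

definition res_char :: "'g set \<Rightarrow> ('g \<Rightarrow> 'k::field) \<Rightarrow> 'g \<Rightarrow> 'k" where
  "res_char H \<phi> = (\<lambda>h. if h \<in> H then \<phi> h else 0)"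

definition ind_char :: "('g, 'b) monoid_scheme \<Rightarrow> 'g set \<Rightarrow> ('g \<Rightarrow> 'k::field_char_0) \<Rightarrow> 'g \<Rightarrow> 'k" where
  "ind_char G H \<phi> = (\<lambda>g. if g \<in> carrier G then
      (1 / of_nat (card H)) *
        (\<Sum>x\<in>carrier G. if inv\<^bsub>G\<^esub> x \<otimes>\<^bsub>G\<^esub> g \<otimes>\<^bsub>G\<^esub> x \<in> H
                         then \<phi> (inv\<^bsub>G\<^esub> x \<otimes>\<^bsub>G\<^esub> g \<otimes>\<^bsub>G\<^esub> x) else 0)
      else 0)"

text \<open>Inertia group of a character eta of N: G_eta = {g. ^g eta = eta}, ^g eta(x) = eta(g^-1 x g).\<close>
definition inertia :: "('g, 'b) monoid_scheme \<Rightarrow> 'g set \<Rightarrow> ('g \<Rightarrow> 'k) \<Rightarrow> 'g set" where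
  "inertia G N \<eta> = {g \<in> carrier G. \<forall>x\<in>N. \<eta> (inv\<^bsub>G\<^esub> g \<otimes>\<^bsub>G\<^esub> x \<otimes>\<^bsub>G\<^esub> g) = \<eta> x}"

definition inflate :: "('g, 'b) monoid_scheme \<Rightarrow> 'g set \<Rightarrow> 'g set \<Rightarrow> ('g set \<Rightarrow> 'k::zero) \<Rightarrow> 'g \<Rightarrow> 'k" where
  "inflate G H N \<omega> = (\<lambda>g. if g \<in> H then \<omega> (N #>\<^bsub>G\<^esub> g) else 0)"

end

(*
  Since the commutator subgroup lies in N, the quotient Q = G_eta / N is abelian; over a splitting
  field its irreducible characters omega are therefore linear, and psi * omega is again an
  irreducible character of G_eta for every irreducible psi.

  As G_eta stabilises eta, the induced character ind eta vanishes off N and is [G_eta : N] * eta on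
  N, so <phi, ind eta> = <res phi, eta> for every character phi of G_eta.  Together with the
  orthogonality relations this forces res psi_i = m_i * eta.  Hence <psi_1 * omega, ind eta> = m_1,
  which is nonzero, giving (ii).  The regular character of Q is the sum of all omega and inflates
  to [G_eta : N] on N and 0 elsewhere, so <psi_i, psi_1 * sum omega> = m_i * m_1 is nonzero, and
  psi_i = psi_1 * omega for some omega, giving (i).  Evaluating at the identity then yields m_i = m_1
  and [G_eta : N] * eta 1 = (ind eta) 1 = s * m_1^2 * eta 1.
*)

theory Submission
  imports Defs "Jordan_Normal_Form.Determinant"
begin

lemma index_mult_mat_sum:
  "A \<in> carrier_mat n m \<Longrightarrow> B \<in> carrier_mat m p \<Longrightarrow> i < n \<Longrightarrow> j < p \<Longrightarrow>
   (A * B) $$ (i, j) = (\<Sum>k<m. A $$ (i, k) * B $$ (k, j))"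
  by (auto simp: scalar_prod_def atLeast0LessThan intro!: sum.cong)

lemma zero_mult_mat_vec [simp]: "v \<in> carrier_vec nc \<Longrightarrow> 0\<^sub>m nr nc *\<^sub>v v = 0\<^sub>v nr"
  by (intro eq_vecI) (auto simp: scalar_prod_def)

lemma mult_mat_vec_zero [simp]: "A \<in> carrier_mat nr nc \<Longrightarrow> A *\<^sub>v 0\<^sub>v nc = 0\<^sub>v nr"
  by (intro eq_vecI) (auto simp: scalar_prod_def)

lemma smult_zero_vec [simp]: "c \<cdot>\<^sub>v 0\<^sub>v n = (0\<^sub>v n :: 'a::mult_zero vec)"
  by (intro eq_vecI) auto

lemma smult_mat_mult_vec:
  fixes A :: "'a::comm_ring mat"
  shows "A \<in> carrier_mat n m \<Longrightarrow> v \<in> carrier_vec m \<Longrightarrow> (c \<cdot>\<^sub>m A) *\<^sub>v v = c \<cdot>\<^sub>v (A *\<^sub>v v)"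
  by (intro eq_vecI) (auto simp: scalar_prod_def sum_distrib_left mult.assoc)

lemma smult_mult_smult_mat:
  fixes A :: "'a::comm_ring mat"
  assumes "A \<in> carrier_mat n m" "B \<in> carrier_mat m p"
  shows "(a \<cdot>\<^sub>m A) * (b \<cdot>\<^sub>m B) = (a * b) \<cdot>\<^sub>m (A * B)"
proof -
  have "(a \<cdot>\<^sub>m A) * (b \<cdot>\<^sub>m B) = a \<cdot>\<^sub>m (b \<cdot>\<^sub>m (A * B))"
    using mult_smult_assoc_mat[OF assms(1) smult_carrier_mat[OF assms(2)]] mult_smult_distrib[OF assms]
    by simp
  also have "\<dots> = (a * b) \<cdot>\<^sub>m (A * B)" by (intro eq_matI) (simp_all add: mult.assoc)
  finally show ?thesis .
qed

lemma mult_mat_vec_unit_vec: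
  fixes A :: "'a::semiring_1 mat"
  shows "A \<in> carrier_mat n p \<Longrightarrow> j < p \<Longrightarrow> A *\<^sub>v unit_vec p j = col A j"
  by (intro eq_vecI) auto

lemma mat_eq_on_vecs:
  fixes A B :: "'a::semiring_1 mat"
  assumes A: "A \<in> carrier_mat n p" and B: "B \<in> carrier_mat n p"
    and eq: "\<And>v. v \<in> carrier_vec p \<Longrightarrow> A *\<^sub>v v = B *\<^sub>v v"
  shows "A = B"
proof (rule mat_col_eqI)
  fix j assume "j < dim_col B"
  then show "col A j = col B j"
    using mult_mat_vec_unit_vec[OF A, of j] mult_mat_vec_unit_vec[OF B, of j] eq[of "unit_vec p j"] B
      by auto
qed (use A B in auto)

lemma bij_mat_has_inverse:
  fixes A :: "'a::field mat"
  assumes A: "A \<in> carrier_mat n p"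
    and surj: "(*\<^sub>v) A ` carrier_vec p = carrier_vec n"
    and inj: "{v \<in> carrier_vec p. A *\<^sub>v v = 0\<^sub>v n} = {0\<^sub>v p}"
  obtains B where "B \<in> carrier_mat p n" "A * B = 1\<^sub>m n" "B * A = 1\<^sub>m p"
proof -
  have "\<exists>v. v \<in> carrier_vec p \<and> A *\<^sub>v v = unit_vec n i" if "i < n" for i
  proof -
    have "unit_vec n i \<in> (*\<^sub>v) A ` carrier_vec p" unfolding surj by simp
    then show ?thesis by (auto simp del: unit_vec_carrier)
  qed
  then obtain b where b: "\<And>i. i < n \<Longrightarrow> b i \<in> carrier_vec p \<and> A *\<^sub>v b i = unit_vec n i"
    by metis
  define B where "B = mat_of_cols p (map b [0..<n])"
  have Bc: "B \<in> carrier_mat p n" unfolding B_def using mat_of_cols_carrier(1)[of p "map b [0..<n]"]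
    by simp
  have AB: "A * B = 1\<^sub>m n"
  proof (rule mat_col_eqI)
    fix i assume "i < dim_col (1\<^sub>m n :: 'a mat)"
    then have i: "i < n" by simp
    have "col B i = b i" unfolding B_def using b[OF i] i by (simp add: col_mat_of_cols)
    then show "col (A * B) i = col (1\<^sub>m n) i" using col_mult2[OF A Bc i] b[OF i] i by simp
  qed (use A Bc in auto)
  have "B * A = 1\<^sub>m p"
  proof (rule mat_eq_on_vecs)
    fix v :: "'a vec" assume v: "v \<in> carrier_vec p"
    have "A *\<^sub>v ((B * A) *\<^sub>v v - v) = (A * B) *\<^sub>v (A *\<^sub>v v) - A *\<^sub>v v"
      using A Bc v by (simp add: mult_minus_distrib_mat_vec assoc_mult_mat_vec[of _ p n _ p]
          assoc_mult_mat_vec[of A n p _ n])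
    also have "\<dots> = 0\<^sub>v n" using AB A v by simp
    finally have "(B * A) *\<^sub>v v - v \<in> {v \<in> carrier_vec p. A *\<^sub>v v = 0\<^sub>v n}" using A Bc v by simp
    then have zero: "(B * A) *\<^sub>v v - v = 0\<^sub>v p" unfolding inj by simp
    have "(B * A) *\<^sub>v v = v"
    proof (rule eq_vecI)
      fix i assume "i < dim_vec v"
      then show "((B * A) *\<^sub>v v) $ i = v $ i" using arg_cong[OF zero, of "\<lambda>x. x $ i"] v A Bc by simp
    qed (use A Bc v in simp)
    then show "(B * A) *\<^sub>v v = 1\<^sub>m p *\<^sub>v v" using v by simp
  qed (use A Bc in auto)
  with Bc AB that show ?thesis by blast
qed

lemma sum_lessThan_add_split:
  fixes r s :: nat
  shows "(\<Sum>k<r + s. f k) = (\<Sum>k<r. f k) + (\<Sum>k<s. f (r + k))"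
  by (induction s) (simp_all add: add.assoc)

lemma mat_tr_carrier: "A \<in> carrier_mat n n \<Longrightarrow> mat_tr A = (\<Sum>i<n. A $$ (i, i))"
  unfolding mat_tr_def by auto

lemma mat_tr_mult_comm:
  assumes "A \<in> carrier_mat n m" "B \<in> carrier_mat m n"
  shows "mat_tr (A * B) = mat_tr (B * A)"
proof -
  have "mat_tr (A * B) = (\<Sum>i<n. \<Sum>k<m. A $$ (i, k) * B $$ (k, i))"
    using assms by (simp add: mat_tr_carrier[of _ n] index_mult_mat_sum del: index_mult_mat(1))
  also have "\<dots> = (\<Sum>k<m. \<Sum>i<n. B $$ (k, i) * A $$ (i, k))"
    by (subst sum.swap) (simp add: mult.commute)
  also have "\<dots> = mat_tr (B * A)"
    using assms by (simp add: mat_tr_carrier[of _ m] index_mult_mat_sum del: index_mult_mat(1))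
  finally show ?thesis .
qed

lemma mat_tr_smult: "A \<in> carrier_mat n n \<Longrightarrow> mat_tr (c \<cdot>\<^sub>m A) = c * mat_tr A"
  by (simp add: mat_tr_carrier[of _ n] sum_distrib_left)

lemma mat_tr_similar:
  assumes A: "A \<in> carrier_mat n n" and Q: "Q \<in> carrier_mat m n" and P: "P \<in> carrier_mat n m"
    and PQ: "P * Q = 1\<^sub>m n"
  shows "mat_tr (Q * A * P) = mat_tr A"
proof -
  have "mat_tr (Q * A * P) = mat_tr (P * (Q * A))"
    using A Q P by (intro mat_tr_mult_comm[of _ m n]) auto
  also have "P * (Q * A) = A"
    using A Q P PQ by (simp add: assoc_mult_mat[symmetric, of P n m Q n A n])
  finally show ?thesis .
qed

section \<open>Bases adapted to a subspace\<close>

lemma smult_append_vec: "c \<cdot>\<^sub>v (v @\<^sub>v w) = (c \<cdot>\<^sub>v v) @\<^sub>v (c \<cdot>\<^sub>v w)"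
  by (intro eq_vecI) (auto simp: append_vec_def Let_def)

lemma mat_of_col_mult_vec:
  fixes t :: "'a::comm_semiring_0 vec"
  shows "t \<in> carrier_vec n \<Longrightarrow> x \<in> carrier_vec 1 \<Longrightarrow> mat_of_cols n [t] *\<^sub>v x = x $ 0 \<cdot>\<^sub>v t"
  by (intro eq_vecI) (auto simp: scalar_prod_def mat_of_cols_def mult.commute)

lemma split_vec_head:
  assumes "w \<in> carrier_vec (1 + n)"
  obtains x v where "x \<in> carrier_vec 1" "v \<in> carrier_vec n" "w = x @\<^sub>v v"
  using vec_first_last_append[OF assms] by (metis vec_first_carrier vec_last_carrier)

lemma append_vec_tail_zero_iff:
  assumes x: "x \<in> carrier_vec m" and y: "y \<in> carrier_vec n"
  shows "(\<forall>k\<in>{m + r..<m + n}. (x @\<^sub>v y) $ k = 0) \<longleftrightarrow> (\<forall>k\<in>{r..<n}. y $ k = 0)"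
proof -
  have idx: "(x @\<^sub>v y) $ (m + k) = y $ k" if "k < n" for k using x y that by simp
  show ?thesis
  proof (intro iffI ballI)
    fix k assume "\<forall>k\<in>{m + r..<m + n}. (x @\<^sub>v y) $ k = 0" and "k \<in> {r..<n}"
    then show "y $ k = 0" using idx[of k] by auto
  next
    fix k assume "\<forall>k\<in>{r..<n}. y $ k = 0" and k: "k \<in> {m + r..<m + n}"
    then show "(x @\<^sub>v y) $ k = 0" using idx[of "k - m"] by auto
  qed
qed

definition vec_subspace :: "nat \<Rightarrow> 'a::field vec set \<Rightarrow> bool" where
  "vec_subspace n W \<longleftrightarrow> W \<subseteq> carrier_vec n \<and> 0\<^sub>v n \<in> W \<and>
     (\<forall>v\<in>W. \<forall>w\<in>W. v + w \<in> W) \<and> (\<forall>c. \<forall>v\<in>W. c \<cdot>\<^sub>v v \<in> W)"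

lemma vec_subspace_add_smult_iff:
  assumes W: "vec_subspace n W" and u: "u \<in> W" and w: "w \<in> carrier_vec n"
  shows "w + c \<cdot>\<^sub>v u \<in> W \<longleftrightarrow> w \<in> W"
proof
  have uc: "u \<in> carrier_vec n" using W u unfolding vec_subspace_def by auto
  assume "w + c \<cdot>\<^sub>v u \<in> W"
  then have "(w + c \<cdot>\<^sub>v u) + (- c) \<cdot>\<^sub>v u \<in> W" using W u unfolding vec_subspace_def by blast
  also have "(w + c \<cdot>\<^sub>v u) + (- c) \<cdot>\<^sub>v u = w"
    using w uc by (intro eq_vecI) auto
  finally show "w \<in> W" .
qed (use W u in \<open>auto simp: vec_subspace_def\<close>)

lemma vec_subspace_tail:
  assumes W: "vec_subspace (1 + n) W"
  shows "vec_subspace n {v \<in> carrier_vec n. 0\<^sub>v 1 @\<^sub>v v \<in> W}"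
  unfolding vec_subspace_def
proof (intro conjI ballI allI; (elim CollectE conjE)?)
  have "(0\<^sub>v 1 :: 'a vec) @\<^sub>v 0\<^sub>v n = 0\<^sub>v (1 + n)" by (intro eq_vecI) auto
  then show "0\<^sub>v n \<in> {v \<in> carrier_vec n. 0\<^sub>v 1 @\<^sub>v v \<in> W}" using W unfolding vec_subspace_def by auto
next
  fix v w :: "'a vec"
  assume "v \<in> carrier_vec n" "0\<^sub>v 1 @\<^sub>v v \<in> W" "w \<in> carrier_vec n" "0\<^sub>v 1 @\<^sub>v w \<in> W"
  moreover have "(0\<^sub>v 1 @\<^sub>v v) + (0\<^sub>v 1 @\<^sub>v w) = 0\<^sub>v 1 @\<^sub>v (v + w)"
    using append_vec_add[of "0\<^sub>v 1" 1 "0\<^sub>v 1" v n w] calculation by simp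
  ultimately show "v + w \<in> {v \<in> carrier_vec n. 0\<^sub>v 1 @\<^sub>v v \<in> W}"
    using W unfolding vec_subspace_def by (metis (mono_tags, lifting) add_carrier_vec mem_Collect_eq)
next
  fix c and v :: "'a vec"
  assume "v \<in> carrier_vec n" "0\<^sub>v 1 @\<^sub>v v \<in> W"
  moreover have "c \<cdot>\<^sub>v (0\<^sub>v 1 @\<^sub>v v) = 0\<^sub>v 1 @\<^sub>v (c \<cdot>\<^sub>v v)"
    unfolding smult_append_vec by (auto intro!: eq_vecI)
  ultimately show "c \<cdot>\<^sub>v v \<in> {v \<in> carrier_vec n. 0\<^sub>v 1 @\<^sub>v v \<in> W}"
    using W unfolding vec_subspace_def by (metis (mono_tags, lifting) smult_carrier_vec mem_Collect_eq)
qed auto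

text \<open>The columns of \<open>P\<close> form a basis of \<open>K\<^sup>n\<close> whose first \<open>r\<close> vectors span \<open>W\<close>,
  and \<open>Q\<close> is the inverse of \<open>P\<close>.\<close>
definition adapted_basis :: "nat \<Rightarrow> 'a::field vec set \<Rightarrow> nat \<Rightarrow> 'a mat \<Rightarrow> 'a mat \<Rightarrow> bool" where
  "adapted_basis n W r Q P \<longleftrightarrow> r \<le> n \<and> Q \<in> carrier_mat n n \<and> P \<in> carrier_mat n n \<and> Q * P = 1\<^sub>m n \<and>
     W = {w \<in> carrier_vec n. \<forall>k\<in>{r..<n}. (Q *\<^sub>v w) $ k = 0}"

lemma adapted_basis_head_zero:
  fixes Q' P' :: "'a::field mat"
  assumes IH: "adapted_basis n {v \<in> carrier_vec n. 0\<^sub>v 1 @\<^sub>v v \<in> W} r Q' P'"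
    and W: "W \<subseteq> carrier_vec (1 + n)" and head: "\<forall>w\<in>W. w $ 0 = 0"
  shows "adapted_basis (1 + n) W r (four_block_mat (0\<^sub>m n 1) Q' (1\<^sub>m 1) (0\<^sub>m 1 n))
                                   (four_block_mat (0\<^sub>m 1 n) (1\<^sub>m 1) P' (0\<^sub>m n 1))"
proof -
  let ?Q = "four_block_mat (0\<^sub>m n 1) Q' (1\<^sub>m 1) (0\<^sub>m 1 n)"
  let ?P = "four_block_mat (0\<^sub>m 1 n) (1\<^sub>m 1) P' (0\<^sub>m n 1)"
  have Q': "Q' \<in> carrier_mat n n" and P': "P' \<in> carrier_mat n n" and QP': "Q' * P' = 1\<^sub>m n"
    and r: "r \<le> n" using IH unfolding adapted_basis_def by auto
  have "?Q * ?P = four_block_mat (1\<^sub>m n) (0\<^sub>m n 1) (0\<^sub>m 1 n) (1\<^sub>m 1)"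
    using Q' P' QP'
      by (simp add: mult_four_block_mat[OF zero_carrier_mat Q' one_carrier_mat zero_carrier_mat
      zero_carrier_mat one_carrier_mat P' zero_carrier_mat])
  then have QP: "?Q * ?P = 1\<^sub>m (1 + n)" by simp
  have Qv: "?Q *\<^sub>v (x @\<^sub>v v) = (Q' *\<^sub>v v) @\<^sub>v x" if "x \<in> carrier_vec 1" "v \<in> carrier_vec n" for x v
    using that Q'
      by (simp add: four_block_mat_mult_vec[OF zero_carrier_mat Q' one_carrier_mat zero_carrier_mat])
  have "w \<in> W \<longleftrightarrow> (\<forall>k\<in>{r..<1 + n}. (?Q *\<^sub>v w) $ k = 0)" if w: "w \<in> carrier_vec (1 + n)" for w
  proof -
    obtain x v where x: "x \<in> carrier_vec 1" and v: "v \<in> carrier_vec n" and wxv: "w = x @\<^sub>v v"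
      using split_vec_head[OF w] .
    have "(x @\<^sub>v v) $ 0 = x $ 0" using x by simp
    then have "x = 0\<^sub>v 1" if "w \<in> W"
      using head that x unfolding wxv by (intro eq_vecI) (auto simp: less_Suc_eq)
    then have "w \<in> W \<longleftrightarrow> x = 0\<^sub>v 1 \<and> 0\<^sub>v 1 @\<^sub>v v \<in> W"
      unfolding wxv by auto
    also have "\<dots> \<longleftrightarrow> x = 0\<^sub>v 1 \<and> (\<forall>k\<in>{r..<n}. (Q' *\<^sub>v v) $ k = 0)"
      using IH v unfolding adapted_basis_def by auto
    also have "\<dots> \<longleftrightarrow> (\<forall>k\<in>{r..<1 + n}. ((Q' *\<^sub>v v) @\<^sub>v x) $ k = 0)"
      using x Q' r by (auto simp: less_Suc_eq intro!: eq_vecI dest: bspec[of _ _ n])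
    finally show ?thesis unfolding wxv Qv[OF x v] .
  qed
  then show ?thesis using W QP Q' P' r unfolding adapted_basis_def by auto
qed

lemma adapted_basis_head_unit:
  fixes Q' P' :: "'a::field mat"
  assumes IH: "adapted_basis n {v \<in> carrier_vec n. 0\<^sub>v 1 @\<^sub>v v \<in> W} r Q' P'"
    and W: "vec_subspace (1 + n) W" and t: "t \<in> carrier_vec n" and u: "unit_vec 1 0 @\<^sub>v t \<in> W"
  shows "adapted_basis (1 + n) W (1 + r)
    (four_block_mat (1\<^sub>m 1) (0\<^sub>m 1 n) (- (Q' * mat_of_cols n [t])) Q')
    (four_block_mat (1\<^sub>m 1) (0\<^sub>m 1 n) (mat_of_cols n [t]) P')"
proof -
  let ?T = "mat_of_cols n [t]"
  let ?Q = "four_block_mat (1\<^sub>m 1) (0\<^sub>m 1 n) (- (Q' * ?T)) Q'"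
  let ?P = "four_block_mat (1\<^sub>m 1) (0\<^sub>m 1 n) ?T P'"
  have Q': "Q' \<in> carrier_mat n n" and P': "P' \<in> carrier_mat n n" and QP': "Q' * P' = 1\<^sub>m n"
    and r: "r \<le> n" using IH unfolding adapted_basis_def by auto
  have T: "?T \<in> carrier_mat n 1" by (simp add: mat_of_cols_def)
  have QT: "- (Q' * ?T) \<in> carrier_mat n 1" using mult_carrier_mat[OF Q' T] by simp
  have "?Q * ?P = four_block_mat (1\<^sub>m 1) (0\<^sub>m 1 n) (0\<^sub>m n 1) (1\<^sub>m n)"
    using Q' P' QP' T by (subst mult_four_block_mat[OF one_carrier_mat zero_carrier_mat QT Q'
      one_carrier_mat zero_carrier_mat T P']) (simp add: uminus_l_inv_mat[OF mult_carrier_mat[OF Q' T]])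
  then have QP: "?Q * ?P = 1\<^sub>m (1 + n)" by simp
  have Qv: "?Q *\<^sub>v (x @\<^sub>v v) = x @\<^sub>v (Q' *\<^sub>v (v + (- x $ 0) \<cdot>\<^sub>v t))"
    if x: "x \<in> carrier_vec 1" and v: "v \<in> carrier_vec n" for x v
  proof -
    have "- (Q' * ?T) *\<^sub>v x = Q' *\<^sub>v ((- x $ 0) \<cdot>\<^sub>v t)"
      using Q' t x by (simp add: assoc_mult_mat_vec[OF Q' T x] mat_of_col_mult_vec mult_mat_vec)
        (intro eq_vecI; simp)
    then show ?thesis
      using Q' t x v by (subst four_block_mat_mult_vec[OF one_carrier_mat zero_carrier_mat QT Q' x v])
        (simp add: mult_add_distrib_mat_vec comm_add_vec[of _ n])
  qed
  have "w \<in> W \<longleftrightarrow> (\<forall>k\<in>{1 + r..<1 + n}. (?Q *\<^sub>v w) $ k = 0)" if w: "w \<in> carrier_vec (1 + n)" for w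
  proof -
    obtain x v where x: "x \<in> carrier_vec 1" and v: "v \<in> carrier_vec n" and wxv: "w = x @\<^sub>v v"
      using split_vec_head[OF w] .
    have "w + (- x $ 0) \<cdot>\<^sub>v (unit_vec 1 0 @\<^sub>v t) = 0\<^sub>v 1 @\<^sub>v (v + (- x $ 0) \<cdot>\<^sub>v t)"
      using x v t unfolding wxv by (intro eq_vecI) auto
    then have "w \<in> W \<longleftrightarrow> 0\<^sub>v 1 @\<^sub>v (v + (- x $ 0) \<cdot>\<^sub>v t) \<in> W"
      using vec_subspace_add_smult_iff[OF W u w, of "- x $ 0"] by simp
    also have "\<dots> \<longleftrightarrow> (\<forall>k\<in>{r..<n}. (Q' *\<^sub>v (v + (- x $ 0) \<cdot>\<^sub>v t)) $ k = 0)"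
      using IH v t unfolding adapted_basis_def by auto
    also have "\<dots> \<longleftrightarrow> (\<forall>k\<in>{1 + r..<1 + n}. (x @\<^sub>v (Q' *\<^sub>v (v + (- x $ 0) \<cdot>\<^sub>v t))) $ k = 0)"
      using append_vec_tail_zero_iff[OF x, of "Q' *\<^sub>v (v + (- x $ 0) \<cdot>\<^sub>v t)" n r] Q' t v by simp
    finally show ?thesis unfolding wxv Qv[OF x v] .
  qed
  then show ?thesis using W QP Q' P' r unfolding adapted_basis_def vec_subspace_def by auto
qed

lemma adapted_basis_exists:
  fixes W :: "'a::field vec set"
  assumes "vec_subspace n W"
  shows "\<exists>r Q P. adapted_basis n W r Q P"
  using assms
proof (induction n arbitrary: W)
  case 0
  have "carrier_vec 0 = {0\<^sub>v 0 :: 'a vec}" by (auto intro: eq_vecI)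
  then have "W = carrier_vec 0" using 0 unfolding vec_subspace_def by auto
  then have "adapted_basis 0 W 0 (1\<^sub>m 0) (1\<^sub>m 0)" unfolding adapted_basis_def by auto
  then show ?case by blast
next
  case (Suc n)
  have W: "vec_subspace (1 + n) W" using Suc.prems by simp
  obtain r Q' P' where IH: "adapted_basis n {v \<in> carrier_vec n. 0\<^sub>v 1 @\<^sub>v v \<in> W} r Q' P'"
    using Suc.IH[OF vec_subspace_tail[OF W]] by blast
  show ?case
  proof (cases "\<exists>u\<in>W. u $ 0 \<noteq> 0")
    case True
    then obtain u where u: "u \<in> W" "u $ 0 \<noteq> 0" by blast
    define u1 where "u1 = (1 / u $ 0) \<cdot>\<^sub>v u"
    have u1: "u1 \<in> W" "u1 \<in> carrier_vec (1 + n)"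
      using u W unfolding u1_def vec_subspace_def by auto
    have "vec_first u1 1 = unit_vec 1 0"
      using u u1(2) unfolding u1_def by (intro eq_vecI) (auto simp: vec_first_def)
    then have "unit_vec 1 0 @\<^sub>v vec_last u1 n \<in> W"
      using vec_first_last_append[OF u1(2)] u1(1) by simp
    from adapted_basis_head_unit[OF IH W vec_last_carrier this] show ?thesis by auto
  next
    case False
    then have "\<forall>w\<in>W. w $ 0 = 0" by blast
    from adapted_basis_head_zero[OF IH _ this] show ?thesis
      using W unfolding vec_subspace_def by auto
  qed
qed

lemma adapted_basis_right_inverse: "adapted_basis n W r Q P \<Longrightarrow> P * Q = 1\<^sub>m n"
  unfolding adapted_basis_def using mat_mult_left_right_inverse by blast

lemma is_rep_carrier: "is_rep H n \<rho> \<Longrightarrow> h \<in> carrier H \<Longrightarrow> \<rho> h \<in> carrier_mat n n"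
  unfolding is_rep_def by auto

lemma is_rep_mult:
  "is_rep H n \<rho> \<Longrightarrow> g \<in> carrier H \<Longrightarrow> h \<in> carrier H \<Longrightarrow> \<rho> (g \<otimes>\<^bsub>H\<^esub> h) = \<rho> g * \<rho> h"
  unfolding is_rep_def by auto

lemma is_rep_one: "is_rep H n \<rho> \<Longrightarrow> \<rho> \<one>\<^bsub>H\<^esub> = 1\<^sub>m n"
  unfolding is_rep_def by auto

lemma rep_invariant_subspace_iff:
  "rep_invariant_subspace H n \<rho> W \<longleftrightarrow> vec_subspace n W \<and> (\<forall>h\<in>carrier H. \<forall>v\<in>W. \<rho> h *\<^sub>v v \<in> W)"
  unfolding rep_invariant_subspace_def vec_subspace_def by blast

lemma is_rep_conjugate:
  assumes rep: "is_rep H n \<rho>" and Q: "Q \<in> carrier_mat n n" and P: "P \<in> carrier_mat n n"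
    and QP: "Q * P = 1\<^sub>m n" and PQ: "P * Q = 1\<^sub>m n"
  shows "is_rep H n (\<lambda>h. Q * \<rho> h * P)"
  unfolding is_rep_def
proof (intro conjI ballI)
  fix g h assume g: "g \<in> carrier H" and h: "h \<in> carrier H"
  have PQ': "P * (Q * C) = C" if "C \<in> carrier_mat n n" for C
    using that Q P PQ by (simp add: assoc_mult_mat[symmetric, of P n n Q n C n])
  show "Q * \<rho> (g \<otimes>\<^bsub>H\<^esub> h) * P = Q * \<rho> g * P * (Q * \<rho> h * P)"
    using Q P is_rep_carrier[OF rep g] is_rep_carrier[OF rep h]
    by (simp add: is_rep_mult[OF rep g h] assoc_mult_mat[of _ n n _ n _ n] PQ')
qed (use Q P QP is_rep_carrier[OF rep] is_rep_one[OF rep] in auto)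

lemma is_rep_block_triangular:
  assumes rep: "is_rep H (r + s) M"
    and zero: "\<And>h i j. h \<in> carrier H \<Longrightarrow> i < s \<Longrightarrow> j < r \<Longrightarrow> M h $$ (r + i, j) = 0"
  defines "\<sigma> \<equiv> \<lambda>h. mat r r (\<lambda>(i, j). M h $$ (i, j))"
    and "\<tau> \<equiv> \<lambda>h. mat s s (\<lambda>(i, j). M h $$ (r + i, r + j))"
  shows "is_rep H r \<sigma>" and "is_rep H s \<tau>"
    and "\<And>h. h \<in> carrier H \<Longrightarrow> mat_tr (M h) = mat_tr (\<sigma> h) + mat_tr (\<tau> h)"
proof -
  note Mc = is_rep_carrier[OF rep]
  have prod: "M (g \<otimes>\<^bsub>H\<^esub> h) $$ (i, j) = (\<Sum>k<r + s. M g $$ (i, k) * M h $$ (k, j))"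
    if "g \<in> carrier H" "h \<in> carrier H" "i < r + s" "j < r + s" for g h i j
    using that by (simp add: is_rep_mult[OF rep] index_mult_mat_sum[OF Mc Mc])
  note [simp del] = index_mult_mat(1)
  show "is_rep H r \<sigma>"
    unfolding is_rep_def
  proof (intro conjI ballI)
    fix g h assume "g \<in> carrier H" "h \<in> carrier H"
    then show "\<sigma> (g \<otimes>\<^bsub>H\<^esub> h) = \<sigma> g * \<sigma> h"
      using zero unfolding \<sigma>_def
      by (intro eq_matI) (auto simp: prod index_mult_mat_sum[of _ r r _ r] sum_lessThan_add_split)
  qed (use is_rep_one[OF rep] in \<open>auto simp: \<sigma>_def\<close>)
  show "is_rep H s \<tau>"
    unfolding is_rep_def
  proof (intro conjI ballI)
    fix g h assume "g \<in> carrier H" "h \<in> carrier H"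
    then show "\<tau> (g \<otimes>\<^bsub>H\<^esub> h) = \<tau> g * \<tau> h"
      using zero unfolding \<tau>_def
      by (intro eq_matI) (auto simp: prod index_mult_mat_sum[of _ s s _ s] sum_lessThan_add_split)
  qed (use is_rep_one[OF rep] in \<open>auto simp: \<tau>_def\<close>)
  show "mat_tr (M h) = mat_tr (\<sigma> h) + mat_tr (\<tau> h)" if "h \<in> carrier H" for h
    using Mc[OF that] unfolding \<sigma>_def \<tau>_def by (simp add: mat_tr_def sum_lessThan_add_split)
qed

lemma adapted_basis_conj_block_zero:
  assumes rep: "is_rep H n \<rho>" and stable: "\<And>h v. h \<in> carrier H \<Longrightarrow> v \<in> W \<Longrightarrow> \<rho> h *\<^sub>v v \<in> W"
    and basis: "adapted_basis n W r Q P" and h: "h \<in> carrier H" and i: "r + i < n" and j: "j < r"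
  shows "(Q * \<rho> h * P) $$ (r + i, j) = 0"
proof -
  have Q: "Q \<in> carrier_mat n n" and P: "P \<in> carrier_mat n n" and QP: "Q * P = 1\<^sub>m n"
    and W: "W = {w \<in> carrier_vec n. \<forall>k\<in>{r..<n}. (Q *\<^sub>v w) $ k = 0}"
    using basis unfolding adapted_basis_def by auto
  have "Q *\<^sub>v (P *\<^sub>v unit_vec n j) = unit_vec n j"
    using Q P QP by (simp add: assoc_mult_mat_vec[symmetric, of Q n n P])
  then have "P *\<^sub>v unit_vec n j \<in> W" unfolding W using P i j by auto
  then have "(Q *\<^sub>v (\<rho> h *\<^sub>v (P *\<^sub>v unit_vec n j))) $ (r + i) = 0"
    using stable[OF h] i unfolding W by auto
  also have "Q *\<^sub>v (\<rho> h *\<^sub>v (P *\<^sub>v unit_vec n j)) = (Q * \<rho> h * P) *\<^sub>v unit_vec n j"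
    using Q P is_rep_carrier[OF rep h]
    by (simp add: assoc_mult_mat_vec[of _ n n _ n] assoc_mult_mat_vec[of Q n n])
  finally show ?thesis using Q P is_rep_carrier[OF rep h] i j by simp
qed

lemma adapted_basis_dim_bounds:
  assumes basis: "adapted_basis n W r Q P" and W: "0\<^sub>v n \<in> W"
    and W0: "W \<noteq> {0\<^sub>v n}" and W1: "W \<noteq> carrier_vec n"
  shows "0 < r" "r < n"
proof -
  have r: "r \<le> n" and Q: "Q \<in> carrier_mat n n" and P: "P \<in> carrier_mat n n"
    and W_eq: "W = {w \<in> carrier_vec n. \<forall>k\<in>{r..<n}. (Q *\<^sub>v w) $ k = 0}"
    using basis unfolding adapted_basis_def by auto
  have PQ: "P * Q = 1\<^sub>m n" using adapted_basis_right_inverse[OF basis] .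
  show "0 < r"
  proof (rule ccontr)
    assume "\<not> 0 < r"
    have "w = 0\<^sub>v n" if w: "w \<in> W" for w
    proof -
      have "Q *\<^sub>v w = 0\<^sub>v n" using w Q \<open>\<not> 0 < r\<close> unfolding W_eq by (intro eq_vecI) auto
      then have "P *\<^sub>v (Q *\<^sub>v w) = 0\<^sub>v n" using P by simp
      then show ?thesis using w P Q PQ unfolding W_eq
        by (simp add: assoc_mult_mat_vec[symmetric, of P n n Q])
    qed
    then show False using W W0 by blast
  qed
  show "r < n" using r W1 unfolding W_eq by (cases "r = n") auto
qed

lemma reducible_rep_char_split:
  fixes \<rho> :: "'g \<Rightarrow> 'k::field mat"
  assumes rep: "is_rep H n \<rho>" and inv: "rep_invariant_subspace H n \<rho> W"
    and W0: "W \<noteq> {0\<^sub>v n}" and W1: "W \<noteq> carrier_vec n"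
  obtains r \<sigma> \<tau> where "0 < r" "r < n" "is_rep H r \<sigma>" "is_rep H (n - r) \<tau>"
    "\<And>h. h \<in> carrier H \<Longrightarrow> mat_tr (\<rho> h) = mat_tr (\<sigma> h) + mat_tr (\<tau> h)"
proof -
  have sub: "vec_subspace n W" and stable: "\<And>h v. h \<in> carrier H \<Longrightarrow> v \<in> W \<Longrightarrow> \<rho> h *\<^sub>v v \<in> W"
    using inv unfolding rep_invariant_subspace_iff by auto
  obtain r Q P where basis: "adapted_basis n W r Q P" using adapted_basis_exists[OF sub] by blast
  have Q: "Q \<in> carrier_mat n n" and P: "P \<in> carrier_mat n n" and QP: "Q * P = 1\<^sub>m n"
    using basis unfolding adapted_basis_def by auto
  note PQ = adapted_basis_right_inverse[OF basis]
  have r: "0 < r" "r < n"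
    using adapted_basis_dim_bounds[OF basis _ W0 W1] sub unfolding vec_subspace_def by auto
  define M where "M h = Q * \<rho> h * P" for h
  have repM: "is_rep H (r + (n - r)) M"
    unfolding M_def using is_rep_conjugate[OF rep Q P QP PQ] r by simp
  have "M h $$ (r + i, j) = 0" if "h \<in> carrier H" "i < n - r" "j < r" for h i j
    unfolding M_def using adapted_basis_conj_block_zero[OF rep stable basis] that by simp
  note split = is_rep_block_triangular[OF repM this]
  moreover have "mat_tr (\<rho> h) = mat_tr (M h)" if "h \<in> carrier H" for h
    unfolding M_def using mat_tr_similar[OF is_rep_carrier[OF rep that] Q P PQ] by simp
  ultimately show ?thesis using r by (intro that[of r]) auto
qed

lemma char_of_sum_irr_char:
  fixes \<rho> :: "'g \<Rightarrow> 'k::field mat"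
  assumes "is_rep H n \<rho>"
  shows "\<exists>xs. (\<forall>\<chi>\<in>set xs. irr_char H \<chi>) \<and> char_of H \<rho> = (\<lambda>h. \<Sum>\<chi>\<leftarrow>xs. \<chi> h)"
  using assms
proof (induction n arbitrary: \<rho> rule: less_induct)
  case (less n)
  consider "n = 0" | "irr_rep H n \<rho>"
    | W where "rep_invariant_subspace H n \<rho> W" "W \<noteq> {0\<^sub>v n}" "W \<noteq> carrier_vec n"
    using less.prems unfolding irr_rep_def by blast
  then show ?case
  proof cases
    case 1
    then have "char_of H \<rho> = (\<lambda>h. 0)"
      using is_rep_carrier[OF less.prems] by (intro ext) (simp add: char_of_def mat_tr_carrier[of _ 0])
    then show ?thesis by (intro exI[of _ "[]"]) simp
  next
    case 2
    then have "irr_char H (char_of H \<rho>)" unfolding irr_char_def by blast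
    then show ?thesis by (intro exI[of _ "[char_of H \<rho>]"]) simp
  next
    case 3
    obtain r \<sigma> \<tau> where r: "0 < r" "r < n" and rep: "is_rep H r \<sigma>" "is_rep H (n - r) \<tau>"
      and tr: "\<And>h. h \<in> carrier H \<Longrightarrow> mat_tr (\<rho> h) = mat_tr (\<sigma> h) + mat_tr (\<tau> h)"
      using reducible_rep_char_split[OF less.prems 3] by metis
    have "n - r < n" using r by simp
    obtain xs ys where "\<forall>\<chi>\<in>set xs. irr_char H \<chi>" "char_of H \<sigma> = (\<lambda>h. \<Sum>\<chi>\<leftarrow>xs. \<chi> h)"
      "\<forall>\<chi>\<in>set ys. irr_char H \<chi>" "char_of H \<tau> = (\<lambda>h. \<Sum>\<chi>\<leftarrow>ys. \<chi> h)"
      using less.IH[OF r(2) rep(1)] less.IH[OF \<open>n - r < n\<close> rep(2)] by blast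
    moreover have "char_of H \<rho> = (\<lambda>h. char_of H \<sigma> h + char_of H \<tau> h)"
      using tr unfolding char_of_def by auto
    ultimately show ?thesis by (intro exI[of _ "xs @ ys"]) auto
  qed
qed

lemma char_of_conj:
  assumes H: "group H" and r: "is_rep H n \<rho>" and x: "x \<in> carrier H" and g: "g \<in> carrier H"
  shows "char_of H \<rho> (inv\<^bsub>H\<^esub> g \<otimes>\<^bsub>H\<^esub> x \<otimes>\<^bsub>H\<^esub> g) = char_of H \<rho> x"
proof -
  interpret group H by fact
  have c: "inv\<^bsub>H\<^esub> g \<otimes>\<^bsub>H\<^esub> x \<otimes>\<^bsub>H\<^esub> g \<in> carrier H" using x g by simp
  have "\<rho> (inv\<^bsub>H\<^esub> g \<otimes>\<^bsub>H\<^esub> x \<otimes>\<^bsub>H\<^esub> g) = \<rho> (inv\<^bsub>H\<^esub> g) * (\<rho> x * \<rho> g)"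
    using x g by (simp add: is_rep_mult[OF r] is_rep_carrier[OF r] assoc_mult_mat[of _ n n _ n _ n])
  then have "mat_tr (\<rho> (inv\<^bsub>H\<^esub> g \<otimes>\<^bsub>H\<^esub> x \<otimes>\<^bsub>H\<^esub> g)) = mat_tr ((\<rho> x * \<rho> g) * \<rho> (inv\<^bsub>H\<^esub> g))"
    using mat_tr_mult_comm[OF is_rep_carrier[OF r inv_closed[OF g]]
        mult_carrier_mat[OF is_rep_carrier[OF r x] is_rep_carrier[OF r g]]]
    by simp
  also have "(\<rho> x * \<rho> g) * \<rho> (inv\<^bsub>H\<^esub> g) = \<rho> (x \<otimes>\<^bsub>H\<^esub> g \<otimes>\<^bsub>H\<^esub> inv\<^bsub>H\<^esub> g)"
    using x g by (simp add: is_rep_mult[OF r])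
  also have "x \<otimes>\<^bsub>H\<^esub> g \<otimes>\<^bsub>H\<^esub> inv\<^bsub>H\<^esub> g = x" using x g by (simp add: m_assoc)
  finally show ?thesis unfolding char_of_def using c x by simp
qed

lemma char_of_degree_one:
  fixes w :: "'g \<Rightarrow> 'k::field mat"
  assumes H: "group H" and rep: "is_rep H 1 w"
  shows "\<And>g. g \<in> carrier H \<Longrightarrow> char_of H w g = w g $$ (0, 0)"
    and "\<And>g h. g \<in> carrier H \<Longrightarrow> h \<in> carrier H \<Longrightarrow>
      char_of H w (g \<otimes>\<^bsub>H\<^esub> h) = char_of H w g * char_of H w h"
    and "char_of H w \<one>\<^bsub>H\<^esub> = 1"
proof -
  show entry: "char_of H w g = w g $$ (0, 0)" if "g \<in> carrier H" for g
    using that is_rep_carrier[OF rep that] by (simp add: char_of_def mat_tr_carrier[of _ 1])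
  show "char_of H w (g \<otimes>\<^bsub>H\<^esub> h) = char_of H w g * char_of H w h"
    if g: "g \<in> carrier H" and h: "h \<in> carrier H" for g h
    using is_rep_carrier[OF rep g] is_rep_carrier[OF rep h] group.subgroup_self[OF H]
    by (simp add: entry g h is_rep_mult[OF rep g h] index_mult_mat_sum[of _ 1 1 _ 1] subgroup.m_closed
      del: index_mult_mat(1))
  show "char_of H w \<one>\<^bsub>H\<^esub> = 1"
    using entry[OF group.subgroup_self[OF H, THEN subgroup.one_closed]] is_rep_one[OF rep] by simp
qed

lemma irr_rep_scale:
  fixes \<rho> :: "'g \<Rightarrow> 'k::field mat"
  assumes irr: "irr_rep H n \<rho>"
    and f_mult: "\<And>g h. g \<in> carrier H \<Longrightarrow> h \<in> carrier H \<Longrightarrow> f (g \<otimes>\<^bsub>H\<^esub> h) = f g * f h"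
    and f_one: "f \<one>\<^bsub>H\<^esub> = 1" and f_nonzero: "\<And>g. g \<in> carrier H \<Longrightarrow> f g \<noteq> 0"
  shows "irr_rep H n (\<lambda>g. f g \<cdot>\<^sub>m \<rho> g)"
proof -
  have rep: "is_rep H n \<rho>" using irr unfolding irr_rep_def by auto
  have "is_rep H n (\<lambda>g. f g \<cdot>\<^sub>m \<rho> g)"
    unfolding is_rep_def
  proof (intro conjI ballI)
    fix g h assume g: "g \<in> carrier H" and h: "h \<in> carrier H"
    show "f (g \<otimes>\<^bsub>H\<^esub> h) \<cdot>\<^sub>m \<rho> (g \<otimes>\<^bsub>H\<^esub> h) = f g \<cdot>\<^sub>m \<rho> g * (f h \<cdot>\<^sub>m \<rho> h)"
      using is_rep_carrier[OF rep g] is_rep_carrier[OF rep h]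
      by (simp add: f_mult[OF g h] is_rep_mult[OF rep g h] smult_mult_smult_mat[of _ n n])
  qed (use is_rep_carrier[OF rep] is_rep_one[OF rep] f_one in auto)
  moreover have "rep_invariant_subspace H n \<rho> W"
    if W: "rep_invariant_subspace H n (\<lambda>g. f g \<cdot>\<^sub>m \<rho> g) W" for W
    unfolding rep_invariant_subspace_iff
  proof (intro conjI ballI)
    show sub: "vec_subspace n W" using W unfolding rep_invariant_subspace_iff by blast
    fix g v assume g: "g \<in> carrier H" and v: "v \<in> W"
    have "(1 / f g) \<cdot>\<^sub>v ((f g \<cdot>\<^sub>m \<rho> g) *\<^sub>v v) \<in> W"
      using W sub g v unfolding rep_invariant_subspace_iff vec_subspace_def by blast
    moreover have "(1 / f g) \<cdot>\<^sub>v ((f g \<cdot>\<^sub>m \<rho> g) *\<^sub>v v) = \<rho> g *\<^sub>v v"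
      using sub v is_rep_carrier[OF rep g] f_nonzero[OF g] unfolding vec_subspace_def
      by (auto simp: smult_mat_mult_vec[of _ n n] smult_smult_assoc)
    ultimately show "\<rho> g *\<^sub>v v \<in> W" by simp
  qed
  ultimately show ?thesis using irr unfolding irr_rep_def by blast
qed

section \<open>Schur's lemma and the orthogonality relations\<close>

lemma intertwiner_mult_vec:
  assumes \<rho>: "is_rep H n \<rho>" and \<sigma>: "is_rep H p \<sigma>" and A: "A \<in> carrier_mat n p"
    and comm: "\<And>h. h \<in> carrier H \<Longrightarrow> \<rho> h * A = A * \<sigma> h"
    and h: "h \<in> carrier H" and v: "v \<in> carrier_vec p"
  shows "A *\<^sub>v (\<sigma> h *\<^sub>v v) = \<rho> h *\<^sub>v (A *\<^sub>v v)"
proof -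
  have "A *\<^sub>v (\<sigma> h *\<^sub>v v) = (A * \<sigma> h) *\<^sub>v v"
    using assoc_mult_mat_vec[OF A is_rep_carrier[OF \<sigma> h] v] by simp
  also have "\<dots> = (\<rho> h * A) *\<^sub>v v" by (simp add: comm[OF h])
  also have "\<dots> = \<rho> h *\<^sub>v (A *\<^sub>v v)" by (rule assoc_mult_mat_vec[OF is_rep_carrier[OF \<rho> h] A v])
  finally show ?thesis .
qed

lemma intertwiner_kernel_invariant:
  fixes \<rho> \<sigma> :: "'g \<Rightarrow> 'k::field mat"
  assumes \<rho>: "is_rep H n \<rho>" and \<sigma>: "is_rep H p \<sigma>" and A: "A \<in> carrier_mat n p"
    and comm: "\<And>h. h \<in> carrier H \<Longrightarrow> \<rho> h * A = A * \<sigma> h"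
  shows "rep_invariant_subspace H p \<sigma> {v \<in> carrier_vec p. A *\<^sub>v v = 0\<^sub>v n}"
  unfolding rep_invariant_subspace_iff vec_subspace_def
proof (intro conjI ballI allI)
  fix h v assume h: "h \<in> carrier H" and v: "v \<in> {v \<in> carrier_vec p. A *\<^sub>v v = 0\<^sub>v n}"
  have "A *\<^sub>v (\<sigma> h *\<^sub>v v) = \<rho> h *\<^sub>v (A *\<^sub>v v)"
    using intertwiner_mult_vec[OF \<rho> \<sigma> A comm h] v by simp
  then show "\<sigma> h *\<^sub>v v \<in> {v \<in> carrier_vec p. A *\<^sub>v v = 0\<^sub>v n}"
    using v is_rep_carrier[OF \<rho> h] is_rep_carrier[OF \<sigma> h] by simp
next
  fix v w assume "v \<in> {v \<in> carrier_vec p. A *\<^sub>v v = 0\<^sub>v n}" "w \<in> {v \<in> carrier_vec p. A *\<^sub>v v = 0\<^sub>v n}"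
  then show "v + w \<in> {v \<in> carrier_vec p. A *\<^sub>v v = 0\<^sub>v n}" using A by (simp add: mult_add_distrib_mat_vec)
next
  fix c v assume "v \<in> {v \<in> carrier_vec p. A *\<^sub>v v = 0\<^sub>v n}"
  then show "c \<cdot>\<^sub>v v \<in> {v \<in> carrier_vec p. A *\<^sub>v v = 0\<^sub>v n}" using A by (simp add: mult_mat_vec)
qed (use A in simp_all)

lemma intertwiner_image_invariant:
  fixes \<rho> \<sigma> :: "'g \<Rightarrow> 'k::field mat"
  assumes \<rho>: "is_rep H n \<rho>" and \<sigma>: "is_rep H p \<sigma>" and A: "A \<in> carrier_mat n p"
    and comm: "\<And>h. h \<in> carrier H \<Longrightarrow> \<rho> h * A = A * \<sigma> h"
  shows "rep_invariant_subspace H n \<rho> ((*\<^sub>v) A ` carrier_vec p)"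
  unfolding rep_invariant_subspace_iff vec_subspace_def
proof (intro conjI ballI allI)
  show "(*\<^sub>v) A ` carrier_vec p \<subseteq> carrier_vec n" using A by auto
  show "0\<^sub>v n \<in> (*\<^sub>v) A ` carrier_vec p" using A by (intro image_eqI[of _ _ "0\<^sub>v p"]) auto
next
  fix v w assume "v \<in> (*\<^sub>v) A ` carrier_vec p" "w \<in> (*\<^sub>v) A ` carrier_vec p"
  then obtain v' w' where "v' \<in> carrier_vec p" "w' \<in> carrier_vec p" "v = A *\<^sub>v v'" "w = A *\<^sub>v w'" by blast
  then show "v + w \<in> (*\<^sub>v) A ` carrier_vec p"
    using A by (intro image_eqI[of _ _ "v' + w'"]) (simp_all add: mult_add_distrib_mat_vec)
next
  fix c v assume "v \<in> (*\<^sub>v) A ` carrier_vec p"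
  then obtain v' where "v' \<in> carrier_vec p" "v = A *\<^sub>v v'" by blast
  then show "c \<cdot>\<^sub>v v \<in> (*\<^sub>v) A ` carrier_vec p"
    using A by (intro image_eqI[of _ _ "c \<cdot>\<^sub>v v'"]) (simp_all add: mult_mat_vec)
next
  fix h v assume h: "h \<in> carrier H" and "v \<in> (*\<^sub>v) A ` carrier_vec p"
  then obtain v' where v': "v' \<in> carrier_vec p" "v = A *\<^sub>v v'" by blast
  have "\<rho> h *\<^sub>v v = A *\<^sub>v (\<sigma> h *\<^sub>v v')"
    using intertwiner_mult_vec[OF \<rho> \<sigma> A comm h v'(1)] v'(2) by simp
  then show "\<rho> h *\<^sub>v v \<in> (*\<^sub>v) A ` carrier_vec p" using v' is_rep_carrier[OF \<sigma> h] by simp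
qed

lemma schur_lemma:
  fixes \<rho> \<sigma> :: "'g \<Rightarrow> 'k::field mat"
  assumes \<rho>: "irr_rep H n \<rho>" and \<sigma>: "irr_rep H p \<sigma>" and A: "A \<in> carrier_mat n p"
    and comm: "\<And>h. h \<in> carrier H \<Longrightarrow> \<rho> h * A = A * \<sigma> h"
  shows "A = 0\<^sub>m n p \<or> char_of H \<rho> = char_of H \<sigma>"
proof -
  have rep: "is_rep H n \<rho>" "is_rep H p \<sigma>" using \<rho> \<sigma> unfolding irr_rep_def by auto
  let ?K = "{v \<in> carrier_vec p. A *\<^sub>v v = 0\<^sub>v n}" and ?I = "(*\<^sub>v) A ` carrier_vec p"
  have K: "?K = {0\<^sub>v p} \<or> ?K = carrier_vec p"
    using \<sigma> intertwiner_kernel_invariant[OF rep A comm] unfolding irr_rep_def by blast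
  have I: "?I = {0\<^sub>v n} \<or> ?I = carrier_vec n"
    using \<rho> intertwiner_image_invariant[OF rep A comm] unfolding irr_rep_def by blast
  show ?thesis
  proof (cases "?K = carrier_vec p \<or> ?I = {0\<^sub>v n}")
    case True
    have "A *\<^sub>v v = 0\<^sub>v n" if v: "v \<in> carrier_vec p" for v
    proof (cases "?K = carrier_vec p")
      case True
      then have "v \<in> ?K" using v by simp
      then show ?thesis by simp
    next
      case False
      then have "?I = {0\<^sub>v n}" using \<open>?K = carrier_vec p \<or> ?I = {0\<^sub>v n}\<close> by simp
      moreover have "A *\<^sub>v v \<in> ?I" using v by simp
      ultimately show ?thesis by simp
    qed
    then have "A = 0\<^sub>m n p" by (intro mat_eq_on_vecs[OF A]) simp_all
    then show ?thesis ..
  next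
    case False
    then have "?K = {0\<^sub>v p}" "?I = carrier_vec n" using K I by simp_all
    then obtain B where B: "B \<in> carrier_mat p n" and AB: "A * B = 1\<^sub>m n" and BA: "B * A = 1\<^sub>m p"
      using bij_mat_has_inverse[OF A] by blast
    have "mat_tr (\<rho> h) = mat_tr (\<sigma> h)" if h: "h \<in> carrier H" for h
    proof -
      have "\<rho> h = \<rho> h * (A * B)" using AB is_rep_carrier[OF rep(1) h] by simp
      also have "\<dots> = A * \<sigma> h * B"
        using A B is_rep_carrier[OF rep(1) h] is_rep_carrier[OF rep(2) h]
        by (simp add: assoc_mult_mat[symmetric, of "\<rho> h" n n A p B n] comm[OF h])
      finally show ?thesis using mat_tr_similar[OF is_rep_carrier[OF rep(2) h] A B BA] by simp
    qed
    then show ?thesis unfolding char_of_def by auto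
  qed
qed

lemma irr_rep_commuting_degree_one:
  fixes \<rho> :: "'g \<Rightarrow> 'k::field mat"
  assumes spl: "splitting_field TYPE('k) H" and irr: "irr_rep H d \<rho>"
    and comm: "\<And>g h. g \<in> carrier H \<Longrightarrow> h \<in> carrier H \<Longrightarrow> \<rho> g * \<rho> h = \<rho> h * \<rho> g"
  shows "d = 1"
proof (rule ccontr)
  assume "d \<noteq> 1"
  moreover have rep: "is_rep H d \<rho>" and "d > 0" using irr unfolding irr_rep_def by auto
  ultimately have d: "1 < d" by simp
  define W :: "'k vec set" where "W = {v \<in> carrier_vec d. \<forall>i\<in>{1..<d}. v $ i = 0}"
  have "rep_invariant_subspace H d \<rho> W"
    unfolding rep_invariant_subspace_iff vec_subspace_def W_def
  proof (intro conjI ballI allI)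
    fix g and v :: "'k vec"
    assume g: "g \<in> carrier H" and v: "v \<in> {v \<in> carrier_vec d. \<forall>i\<in>{1..<d}. v $ i = 0}"
    obtain c where c: "\<rho> g = c \<cdot>\<^sub>m 1\<^sub>m d"
      using spl irr is_rep_carrier[OF rep g] comm[OF g] unfolding splitting_field_def by metis
    have "\<rho> g *\<^sub>v v = c \<cdot>\<^sub>v v" unfolding c using v by (simp add: smult_mat_mult_vec[of _ d d])
    then show "\<rho> g *\<^sub>v v \<in> {v \<in> carrier_vec d. \<forall>i\<in>{1..<d}. v $ i = 0}" using v by auto
  qed (auto simp: Ball_def)
  then have "W = {0\<^sub>v d} \<or> W = carrier_vec d" using irr unfolding irr_rep_def by blast
  moreover have "unit_vec d 0 \<in> W" "unit_vec d 0 \<noteq> (0\<^sub>v d :: 'k vec)" "unit_vec d 1 \<notin> W"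
    unfolding W_def using d by auto
  ultimately show False by (metis singletonD unit_vec_carrier)
qed

text \<open>The factor \<open>g (inv h)\<close> replaces complex conjugation: the form makes sense over every
  field and agrees with the usual inner product on characters.\<close>
definition char_inner :: "('g, 'b) monoid_scheme \<Rightarrow> ('g \<Rightarrow> 'k::field) \<Rightarrow> ('g \<Rightarrow> 'k) \<Rightarrow> 'k" where
  "char_inner H f g = (\<Sum>h\<in>carrier H. f h * g (inv\<^bsub>H\<^esub> h)) / of_nat (card (carrier H))"

lemma char_inner_cong:
  assumes H: "group H" and "\<And>h. h \<in> carrier H \<Longrightarrow> f h = f' h" and "\<And>h. h \<in> carrier H \<Longrightarrow> g h = g' h"
  shows "char_inner H f g = char_inner H f' g'"
  unfolding char_inner_def using assms group.inv_closed[OF H]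
    by (intro arg_cong2[where f="(/)"] sum.cong) auto

lemma char_inner_scale_left: "char_inner H (\<lambda>h. c * f h) g = c * char_inner H f g"
  unfolding char_inner_def by (simp add: sum_distrib_left mult_ac)

lemma char_inner_scale_right: "char_inner H f (\<lambda>h. c * g h) = c * char_inner H f g"
  unfolding char_inner_def by (simp add: sum_distrib_left mult_ac)

lemma char_inner_sum_left: "char_inner H (\<lambda>h. \<Sum>i\<in>I. F i h) g = (\<Sum>i\<in>I. char_inner H (F i) g)"
  unfolding char_inner_def
    by (simp add: sum_distrib_right sum_divide_distrib[symmetric] sum.swap[of _ I])

lemma char_inner_sum_right: "char_inner H f (\<lambda>h. \<Sum>i\<in>I. F i h) = (\<Sum>i\<in>I. char_inner H f (F i))"
  unfolding char_inner_def
    by (simp add: sum_distrib_left sum_divide_distrib[symmetric] sum.swap[of _ I])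

lemma char_inner_sum_list_left:
  "char_inner H (\<lambda>h. \<Sum>x\<leftarrow>xs. F x h) g = (\<Sum>x\<leftarrow>xs. char_inner H (F x) g)"
  by (induction xs) (simp_all add: char_inner_def distrib_right sum.distrib add_divide_distrib)

lemma char_inner_sum_list_right:
  "char_inner H f (\<lambda>h. \<Sum>x\<leftarrow>xs. F x h) = (\<Sum>x\<leftarrow>xs. char_inner H f (F x))"
  by (induction xs) (simp_all add: char_inner_def distrib_left sum.distrib add_divide_distrib)

lemma sum_list_indicator_eq_count:
  "(\<Sum>x\<leftarrow>xs. if x = a then 1 else 0) = (of_nat (count_list xs a) :: 'a::semiring_1)"
  by (induction xs) auto

lemma sum_list_indicator_nonzero:
  "(\<Sum>x\<leftarrow>xs. if P x then 1 else 0) \<noteq> (0 :: 'a::semiring_1) \<Longrightarrow> \<exists>x\<in>set xs. P x"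
  by (induction xs) (auto split: if_splits)

lemma (in group) sum_left_mult_reindex:
  assumes "g \<in> carrier G"
  shows "(\<Sum>h\<in>carrier G. F (g \<otimes> h) (inv h)) = (\<Sum>h\<in>carrier G. F h (inv h \<otimes> g))"
proof (rule sum.reindex_bij_witness[of _ "\<lambda>h. inv g \<otimes> h" "\<lambda>h. g \<otimes> h"])
  fix a assume a: "a \<in> carrier G"
  show "inv g \<otimes> (g \<otimes> a) = a" using a assms by (simp add: m_assoc[symmetric])
  show "g \<otimes> a \<in> carrier G" using a assms by simp
  show "g \<otimes> (inv g \<otimes> a) = a" using a assms by (simp add: m_assoc[symmetric])
  show "inv g \<otimes> a \<in> carrier G" using a assms by simp
  show "F (g \<otimes> a) (inv (g \<otimes> a) \<otimes> g) = F (g \<otimes> a) (inv a)"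
    using a assms by (simp add: m_assoc inv_mult_group)
qed

text \<open>\<open>A\<close> is \<open>\<Sum>h. \<rho> h * E * \<sigma> (inv h)\<close> for the matrix unit \<open>E\<close> at position \<open>(j, k)\<close>.\<close>
lemma averaged_matrix_intertwines:
  fixes \<rho> \<sigma> :: "'g \<Rightarrow> 'k::field mat"
  fixes j k :: nat
  assumes H: "group H" and r: "is_rep H n \<rho>" and s: "is_rep H p \<sigma>" and g: "g \<in> carrier H"
  defines "A \<equiv> mat n p (\<lambda>(i, l). \<Sum>h\<in>carrier H. \<rho> h $$ (i, j) * \<sigma> (inv\<^bsub>H\<^esub> h) $$ (k, l))"
  assumes j: "j < n" and k: "k < p"
  shows "\<rho> g * A = A * \<sigma> g"
proof (intro eq_matI)
  have Ac: "A \<in> carrier_mat n p" unfolding A_def by auto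
  fix i l assume il: "i < dim_row (A * \<sigma> g)" "l < dim_col (A * \<sigma> g)"
  then have i: "i < n" and l: "l < p" using Ac is_rep_carrier[OF s g] by auto
  have "(\<rho> g * A) $$ (i, l) = (\<Sum>m<n. \<rho> g $$ (i, m) * A $$ (m, l))"
    using index_mult_mat_sum[OF is_rep_carrier[OF r g] Ac i l] .
  also have "\<dots> = (\<Sum>m<n. \<Sum>h\<in>carrier H. \<rho> g $$ (i, m) * (\<rho> h $$ (m, j) * \<sigma> (inv\<^bsub>H\<^esub> h) $$ (k, l)))"
    unfolding A_def using l by (auto simp: sum_distrib_left intro!: sum.cong)
  also have "\<dots> = (\<Sum>h\<in>carrier H. (\<Sum>m<n. \<rho> g $$ (i, m) * \<rho> h $$ (m, j)) * \<sigma> (inv\<^bsub>H\<^esub> h) $$ (k, l))"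
    by (subst sum.swap) (simp add: sum_distrib_right mult.assoc)
  also have "\<dots> = (\<Sum>h\<in>carrier H. \<rho> (g \<otimes>\<^bsub>H\<^esub> h) $$ (i, j) * \<sigma> (inv\<^bsub>H\<^esub> h) $$ (k, l))"
    using i j g
      by (intro sum.cong refl)
        (simp add: is_rep_mult[OF r] index_mult_mat_sum[OF is_rep_carrier[OF r g] is_rep_carrier[OF r]])
  also have "\<dots> = (\<Sum>h\<in>carrier H. \<rho> h $$ (i, j) * \<sigma> (inv\<^bsub>H\<^esub> h \<otimes>\<^bsub>H\<^esub> g) $$ (k, l))"
    using group.sum_left_mult_reindex[OF H g, of "\<lambda>a b. \<rho> a $$ (i, j) * \<sigma> b $$ (k, l)"] by simp
  also have "\<dots> = (\<Sum>h\<in>carrier H. \<rho> h $$ (i, j) * (\<Sum>m<p. \<sigma> (inv\<^bsub>H\<^esub> h) $$ (k, m) * \<sigma> g $$ (m, l)))"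
    using k l g
      by (intro sum.cong refl) (simp add: is_rep_mult[OF s] group.inv_closed[OF H]
        index_mult_mat_sum[OF is_rep_carrier[OF s] is_rep_carrier[OF s g]])
  also have "\<dots> = (\<Sum>m<p. (\<Sum>h\<in>carrier H. \<rho> h $$ (i, j) * \<sigma> (inv\<^bsub>H\<^esub> h) $$ (k, m)) * \<sigma> g $$ (m, l))"
    unfolding sum_distrib_left sum_distrib_right by (subst sum.swap) (simp add: mult.assoc)
  also have "\<dots> = (\<Sum>m<p. A $$ (i, m) * \<sigma> g $$ (m, l))"
    unfolding A_def using i by (auto intro!: sum.cong)
  also have "\<dots> = (A * \<sigma> g) $$ (i, l)" using index_mult_mat_sum[OF Ac is_rep_carrier[OF s g] i l] by simp
  finally show "(\<rho> g * A) $$ (i, l) = (A * \<sigma> g) $$ (i, l)" .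
qed (use is_rep_carrier[OF r g] is_rep_carrier[OF s g] in \<open>auto simp: A_def\<close>)

lemma char_orth_entries_distinct:
  fixes \<rho> \<sigma> :: "'g \<Rightarrow> 'k::field mat"
  assumes H: "group H" and \<rho>: "irr_rep H n \<rho>" and \<sigma>: "irr_rep H p \<sigma>"
    and ne: "char_of H \<rho> \<noteq> char_of H \<sigma>" and i: "i < n" and l: "l < p"
  shows "(\<Sum>h\<in>carrier H. \<rho> h $$ (i, i) * \<sigma> (inv\<^bsub>H\<^esub> h) $$ (l, l)) = 0"
proof -
  have r: "is_rep H n \<rho>" and s: "is_rep H p \<sigma>" using \<rho> \<sigma> unfolding irr_rep_def by auto
  define A where "A = mat n p (\<lambda>(a, b). \<Sum>h\<in>carrier H. \<rho> h $$ (a, i) * \<sigma> (inv\<^bsub>H\<^esub> h) $$ (l, b))"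
  have "\<rho> h * A = A * \<sigma> h" if "h \<in> carrier H" for h
    unfolding A_def by (rule averaged_matrix_intertwines[OF H r s that i l])
  then have "A = 0\<^sub>m n p" using schur_lemma[OF \<rho> \<sigma>, of A] ne unfolding A_def by auto
  from arg_cong[OF this, of "\<lambda>M. M $$ (i, l)"] show ?thesis using i l unfolding A_def by simp
qed

lemma char_orth_entries_same:
  fixes \<rho> :: "'g \<Rightarrow> 'k::field_char_0 mat"
  assumes H: "group H" and spl: "splitting_field TYPE('k) H" and \<rho>: "irr_rep H n \<rho>"
    and i: "i < n" and l: "l < n"
  shows "(\<Sum>h\<in>carrier H. \<rho> h $$ (i, i) * \<rho> (inv\<^bsub>H\<^esub> h) $$ (l, l)) =
    (if i = l then of_nat (card (carrier H)) / of_nat n else 0)"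
proof -
  have r: "is_rep H n \<rho>" and n0: "n > 0" using \<rho> unfolding irr_rep_def by auto
  define A where "A = mat n n (\<lambda>(a, b). \<Sum>h\<in>carrier H. \<rho> h $$ (a, i) * \<rho> (inv\<^bsub>H\<^esub> h) $$ (l, b))"
  have Ac: "A \<in> carrier_mat n n" unfolding A_def by auto
  have "\<rho> h * A = A * \<rho> h" if "h \<in> carrier H" for h
    unfolding A_def by (rule averaged_matrix_intertwines[OF H r r that i l])
  then obtain c where c: "A = c \<cdot>\<^sub>m 1\<^sub>m n" using spl \<rho> Ac unfolding splitting_field_def by metis
  have "mat_tr A = (\<Sum>a<n. \<Sum>h\<in>carrier H. \<rho> (inv\<^bsub>H\<^esub> h) $$ (l, a) * \<rho> h $$ (a, i))"
    unfolding mat_tr_carrier[OF Ac] unfolding A_def by (intro sum.cong refl) (auto simp: mult.commute)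
  also have "\<dots> = (\<Sum>h\<in>carrier H. (\<rho> (inv\<^bsub>H\<^esub> h) * \<rho> h) $$ (l, i))"
    by (subst sum.swap) (intro sum.cong refl, simp add: index_mult_mat_sum[OF is_rep_carrier[OF r]
      is_rep_carrier[OF r] l i] group.inv_closed[OF H])
  also have "\<dots> = (\<Sum>h\<in>carrier H. 1\<^sub>m n $$ (l, i))"
    by (intro sum.cong refl) (simp add: is_rep_mult[OF r, symmetric] group.inv_closed[OF H]
      group.l_inv[OF H] is_rep_one[OF r])
  finally have "of_nat n * c = of_nat (card (carrier H)) * (if l = i then 1 else 0)"
    using l i unfolding c mat_tr_carrier[OF smult_carrier_mat[OF one_carrier_mat]] by simp
  then have "c = (if i = l then of_nat (card (carrier H)) / of_nat n else 0)"
    using n0 by (auto simp: field_simps)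
  moreover have "A $$ (i, l) = (if i = l then c else 0)" unfolding c using i l by simp
  ultimately show ?thesis unfolding A_def using i l by auto
qed

lemma sum_mat_tr_mult_inv:
  assumes H: "group H" and r: "is_rep H n \<rho>" and s: "is_rep H p \<sigma>"
  shows "(\<Sum>h\<in>carrier H. mat_tr (\<rho> h) * mat_tr (\<sigma> (inv\<^bsub>H\<^esub> h))) =
    (\<Sum>i<n. \<Sum>l<p. \<Sum>h\<in>carrier H. \<rho> h $$ (i, i) * \<sigma> (inv\<^bsub>H\<^esub> h) $$ (l, l))"
proof -
  have "(\<Sum>h\<in>carrier H. mat_tr (\<rho> h) * mat_tr (\<sigma> (inv\<^bsub>H\<^esub> h)))
      = (\<Sum>h\<in>carrier H. \<Sum>i<n. \<Sum>l<p. \<rho> h $$ (i, i) * \<sigma> (inv\<^bsub>H\<^esub> h) $$ (l, l))"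
    by (intro sum.cong refl) (simp add: mat_tr_carrier[OF is_rep_carrier[OF r]]
      mat_tr_carrier[OF is_rep_carrier[OF s]] group.inv_closed[OF H] sum_product)
  also have "\<dots> = (\<Sum>i<n. \<Sum>l<p. \<Sum>h\<in>carrier H. \<rho> h $$ (i, i) * \<sigma> (inv\<^bsub>H\<^esub> h) $$ (l, l))"
    by (subst sum.swap) (simp add: sum.swap[of _ "carrier H"])
  finally show ?thesis .
qed

lemma char_orth_distinct:
  fixes \<rho> \<sigma> :: "'g \<Rightarrow> 'k::field mat"
  assumes H: "group H" and \<rho>: "irr_rep H n \<rho>" and \<sigma>: "irr_rep H p \<sigma>"
    and ne: "char_of H \<rho> \<noteq> char_of H \<sigma>"
  shows "(\<Sum>h\<in>carrier H. mat_tr (\<rho> h) * mat_tr (\<sigma> (inv\<^bsub>H\<^esub> h))) = 0"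
proof -
  have "is_rep H n \<rho>" "is_rep H p \<sigma>" using \<rho> \<sigma> unfolding irr_rep_def by auto
  then show ?thesis by (simp add: sum_mat_tr_mult_inv[OF H] char_orth_entries_distinct[OF H \<rho> \<sigma> ne])
qed

lemma char_orth_same:
  fixes \<rho> :: "'g \<Rightarrow> 'k::field_char_0 mat"
  assumes H: "group H" and spl: "splitting_field TYPE('k) H" and \<rho>: "irr_rep H n \<rho>"
  shows "(\<Sum>h\<in>carrier H. mat_tr (\<rho> h) * mat_tr (\<rho> (inv\<^bsub>H\<^esub> h))) = of_nat (card (carrier H))"
proof -
  have r: "is_rep H n \<rho>" and n0: "n > 0" using \<rho> unfolding irr_rep_def by auto
  have "(\<Sum>h\<in>carrier H. mat_tr (\<rho> h) * mat_tr (\<rho> (inv\<^bsub>H\<^esub> h))) =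
      (\<Sum>i<n. \<Sum>l<n. if i = l then of_nat (card (carrier H)) / of_nat n else 0)"
    unfolding sum_mat_tr_mult_inv[OF H r r]
      by (intro sum.cong refl) (simp add: char_orth_entries_same[OF H spl \<rho>])
  also have "\<dots> = of_nat (card (carrier H))" using n0 by simp
  finally show ?thesis .
qed

lemma irr_char_orthonormal:
  fixes \<chi> \<chi>' :: "'g \<Rightarrow> 'k::field_char_0"
  assumes H: "group H" and fin: "finite (carrier H)" and spl: "splitting_field TYPE('k) H"
    and c1: "irr_char H \<chi>" and c2: "irr_char H \<chi>'"
  shows "char_inner H \<chi> \<chi>' = (if \<chi> = \<chi>' then 1 else 0)"
proof -
  obtain n \<rho> where ir: "irr_rep H n \<rho>" and \<chi>: "\<chi> = char_of H \<rho>" using c1 unfolding irr_char_def by auto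
  obtain p \<sigma> where irs: "irr_rep H p \<sigma>" and \<chi>': "\<chi>' = char_of H \<sigma>" using c2 unfolding irr_char_def
    by auto
  have cne: "card (carrier H) \<noteq> 0" using fin
    by (metis H card_0_eq empty_iff group.is_monoid monoid.one_closed)
  have e: "(\<Sum>h\<in>carrier H. \<chi> h * \<chi>' (inv\<^bsub>H\<^esub> h)) = (\<Sum>h\<in>carrier H. mat_tr (\<rho> h) * mat_tr (\<sigma> (inv\<^bsub>H\<^esub> h)))"
    unfolding \<chi> \<chi>' char_of_def by (intro sum.cong refl) (simp add: group.inv_closed[OF H])
  show ?thesis
  proof (cases "\<chi> = \<chi>'")
    case True
    have e2: "(\<Sum>h\<in>carrier H. \<chi> h * \<chi>' (inv\<^bsub>H\<^esub> h)) = (\<Sum>h\<in>carrier H. mat_tr (\<rho> h) * mat_tr (\<rho> (inv\<^bsub>H\<^esub> h)))"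
      unfolding True[symmetric] \<chi> char_of_def
        by (intro sum.cong refl) (simp add: group.inv_closed[OF H])
    show ?thesis unfolding char_inner_def e2 char_orth_same[OF H spl ir] using True cne by simp
  next
    case False
    then show ?thesis unfolding char_inner_def e char_orth_distinct[OF H ir irs False[unfolded \<chi> \<chi>']]
      by simp
  qed
qed

section \<open>The regular character\<close>

definition regular_rep :: "('a, 'b) monoid_scheme \<Rightarrow> (nat \<Rightarrow> 'a) \<Rightarrow> nat \<Rightarrow> 'a \<Rightarrow> 'k::field mat" where
  "regular_rep G e q a = mat q q (\<lambda>(i, j). if a \<otimes>\<^bsub>G\<^esub> e j = e i then 1 else 0)"

lemma (in group) is_rep_regular_rep:
  assumes e: "bij_betw e {..<q} (carrier G)"
  shows "is_rep G q (regular_rep G e q :: 'a \<Rightarrow> 'k::field mat)"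
proof -
  have ec: "e i \<in> carrier G" if "i < q" for i using e that unfolding bij_betw_def by auto
  have einj: "e i = e j \<longleftrightarrow> i = j" if "i < q" "j < q" for i j
    using e that unfolding bij_betw_def inj_on_def by auto
  have "regular_rep G e q (a \<otimes> b) = (regular_rep G e q a * regular_rep G e q b :: 'k mat)"
    if a: "a \<in> carrier G" and b: "b \<in> carrier G" for a b
  proof (rule eq_matI)
    fix i j assume "i < dim_row (regular_rep G e q a * regular_rep G e q b :: 'k mat)"
      "j < dim_col (regular_rep G e q a * regular_rep G e q b :: 'k mat)"
    then have i: "i < q" and j: "j < q" unfolding regular_rep_def by auto
    obtain k0 where k0: "k0 < q" "e k0 = b \<otimes> e j"
      using e b ec[OF j] unfolding bij_betw_def by (metis imageE lessThan_iff m_closed)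
    have "(regular_rep G e q a * regular_rep G e q b :: 'k mat) $$ (i, j) =
        (\<Sum>k<q. (regular_rep G e q a :: 'k mat) $$ (i, k) * (regular_rep G e q b :: 'k mat) $$ (k, j))"
      using i j by (simp add: index_mult_mat_sum[of _ q q _ q] regular_rep_def del: index_mult_mat(1))
    also have "\<dots> = (\<Sum>k<q. if k = k0 then (if a \<otimes> e k0 = e i then 1 else 0) else 0)"
    proof (intro sum.cong refl)
      fix k assume "k \<in> {..<q}"
      then have "b \<otimes> e j = e k \<longleftrightarrow> k = k0" using k0 einj[of k k0] by auto
      then show "(regular_rep G e q a :: 'k mat) $$ (i, k) * (regular_rep G e q b :: 'k mat) $$ (k, j) =
          (if k = k0 then (if a \<otimes> e k0 = e i then 1 else 0) else 0)"
        using i j \<open>k \<in> {..<q}\<close> by (auto simp: regular_rep_def)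
    qed
    also have "\<dots> = regular_rep G e q (a \<otimes> b) $$ (i, j)"
      using i j k0 a b ec[OF j] by (simp add: regular_rep_def m_assoc)
    finally show "regular_rep G e q (a \<otimes> b) $$ (i, j) =
      (regular_rep G e q a * regular_rep G e q b :: 'k mat) $$ (i, j)" ..
  qed (simp_all add: regular_rep_def)
  moreover have "regular_rep G e q \<one> = (1\<^sub>m q :: 'k mat)"
    unfolding regular_rep_def by (intro eq_matI) (auto simp: ec einj)
  ultimately show ?thesis unfolding is_rep_def by (simp add: regular_rep_def)
qed

lemma (in group) mat_tr_regular_rep:
  assumes e: "bij_betw e {..<q} (carrier G)" and a: "a \<in> carrier G"
  shows "mat_tr (regular_rep G e q a :: 'k::field mat) = (if a = \<one> then of_nat q else 0)"
proof -
  have "e i \<in> carrier G" if "i < q" for i using e that unfolding bij_betw_def by auto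
  then have "(\<Sum>i<q. (regular_rep G e q a :: 'k mat) $$ (i, i)) = (\<Sum>i<q. if a = \<one> then 1 else 0)"
    using a by (intro sum.cong) (auto simp: regular_rep_def)
  then show ?thesis by (simp add: mat_tr_def regular_rep_def)
qed

lemma (in group) regular_char_decomposition:
  assumes "finite (carrier G)"
  obtains xs :: "('a \<Rightarrow> 'k::field) list"
  where "\<forall>\<chi>\<in>set xs. irr_char G \<chi>"
    "\<And>a. a \<in> carrier G \<Longrightarrow> (\<Sum>\<chi>\<leftarrow>xs. \<chi> a) = (if a = \<one> then of_nat (card (carrier G)) else 0)"
proof -
  obtain e where e: "bij_betw e {..<card (carrier G)} (carrier G)"
    using ex_bij_betw_nat_finite[OF assms] atLeast0LessThan by metis
  obtain xs where "\<forall>\<chi>\<in>set xs. irr_char G \<chi>"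
    "char_of G (regular_rep G e (card (carrier G))) = (\<lambda>h. \<Sum>\<chi>\<leftarrow>xs. (\<chi> h :: 'k))"
    using char_of_sum_irr_char[OF is_rep_regular_rep[OF e]] by blast
  moreover have "(\<Sum>\<chi>\<leftarrow>xs. \<chi> a) = (if a = \<one> then of_nat (card (carrier G)) else 0)"
    if "a \<in> carrier G" for a
  proof -
    have "(\<Sum>\<chi>\<leftarrow>xs. \<chi> a) = mat_tr (regular_rep G e (card (carrier G)) a :: 'k mat)"
      using fun_cong[OF calculation(2), of a] that unfolding char_of_def by simp
    also have "\<dots> = (if a = \<one> then of_nat (card (carrier G)) else 0)"
      by (rule mat_tr_regular_rep[OF e that])
    finally show ?thesis .
  qed
  ultimately show ?thesis using that by blast
qed

lemma (in group) inertia_subgroup: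
  assumes N: "N \<lhd> G"
  shows "subgroup (inertia G N \<eta>) G"
proof -
  have N_car: "N \<subseteq> carrier G" using N normal_imp_subgroup subgroup.subset by blast
  show ?thesis
  proof (rule subgroupI)
    show "inertia G N \<eta> \<subseteq> carrier G" unfolding inertia_def by auto
    have "\<one> \<in> inertia G N \<eta>" unfolding inertia_def using N_car by auto
    then show "inertia G N \<eta> \<noteq> {}" by blast
  next
    fix a assume a: "a \<in> inertia G N \<eta>"
    then have ac: "a \<in> carrier G" and ak: "\<And>x. x \<in> N \<Longrightarrow> \<eta> (inv a \<otimes> x \<otimes> a) = \<eta> x"
      unfolding inertia_def by auto
    have "\<eta> (inv (inv a) \<otimes> x \<otimes> inv a) = \<eta> x" if x: "x \<in> N" for x
    proof -
      have xc: "x \<in> carrier G" using x N_car by blast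
      have "a \<otimes> x \<otimes> inv a \<in> N" using normal.inv_op_closed2[OF N] ac x by blast
      then have "\<eta> (inv a \<otimes> (a \<otimes> x \<otimes> inv a) \<otimes> a) = \<eta> (a \<otimes> x \<otimes> inv a)" by (rule ak)
      moreover have "inv a \<otimes> (a \<otimes> x \<otimes> inv a) \<otimes> a = x"
        using ac xc by (simp add: m_assoc[symmetric]) (simp add: m_assoc)
      ultimately show ?thesis using ac by simp
    qed
    then show "inv a \<in> inertia G N \<eta>" using ac unfolding inertia_def by auto
  next
    fix a b assume "a \<in> inertia G N \<eta>" "b \<in> inertia G N \<eta>"
    then have ac: "a \<in> carrier G" and ak: "\<And>x. x \<in> N \<Longrightarrow> \<eta> (inv a \<otimes> x \<otimes> a) = \<eta> x"
      and bc: "b \<in> carrier G" and bk: "\<And>x. x \<in> N \<Longrightarrow> \<eta> (inv b \<otimes> x \<otimes> b) = \<eta> x"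
      unfolding inertia_def by auto
    have "\<eta> (inv (a \<otimes> b) \<otimes> x \<otimes> (a \<otimes> b)) = \<eta> x" if x: "x \<in> N" for x
    proof -
      have xc: "x \<in> carrier G" using x N_car by blast
      have "inv a \<otimes> x \<otimes> a \<in> N" using normal.inv_op_closed1[OF N] ac x by blast
      moreover have "inv (a \<otimes> b) \<otimes> x \<otimes> (a \<otimes> b) = inv b \<otimes> (inv a \<otimes> x \<otimes> a) \<otimes> b"
        using ac bc xc by (simp add: inv_mult_group m_assoc)
      ultimately show ?thesis using bk ak[OF x] by simp
    qed
    then show "a \<otimes> b \<in> inertia G N \<eta>" using ac bc unfolding inertia_def by auto
  qed
qed

lemma (in group) normal_conj_mem_iff:
  assumes N: "N \<lhd> G" and x: "x \<in> carrier G" and g: "g \<in> carrier G"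
  shows "inv x \<otimes> g \<otimes> x \<in> N \<longleftrightarrow> g \<in> N"
proof
  assume "inv x \<otimes> g \<otimes> x \<in> N"
  then have "x \<otimes> (inv x \<otimes> g \<otimes> x) \<otimes> inv x \<in> N" using normal.inv_op_closed2[OF N] x by blast
  also have "x \<otimes> (inv x \<otimes> g \<otimes> x) \<otimes> inv x = g" using x g
    by (simp add: m_assoc[symmetric]) (simp add: m_assoc)
  finally show "g \<in> N" .
qed (use normal.inv_op_closed1[OF N] x in blast)

lemma (in group) rcos_mult_comm_of_derived:
  assumes N: "N \<lhd> G" and der: "derived G (carrier G) \<subseteq> N"
    and a: "a \<in> carrier G" and b: "b \<in> carrier G"
  shows "N #> (a \<otimes> b) = N #> (b \<otimes> a)"
proof -
  have N_car: "N \<subseteq> carrier G" using N normal_imp_subgroup subgroup.subset by blast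
  have "a \<otimes> b \<otimes> inv a \<otimes> inv b \<in> derived_set G (carrier G)"
    by (rule UN_I[OF a], rule UN_I[OF b]) simp
  then have "a \<otimes> b \<otimes> inv a \<otimes> inv b \<in> derived G (carrier G)"
    unfolding derived_def by (rule generate.incl)
  then have "a \<otimes> b \<otimes> inv a \<otimes> inv b \<in> N" using der by (rule subsetD[rotated])
  then have "(a \<otimes> b \<otimes> inv a \<otimes> inv b) \<otimes> (b \<otimes> a) \<in> N #> (b \<otimes> a)" using rcosI[OF _ N_car] a b by simp
  also have "(a \<otimes> b \<otimes> inv a \<otimes> inv b) \<otimes> (b \<otimes> a) = a \<otimes> b"
    using a b by (simp add: m_assoc[symmetric]) (simp add: m_assoc)
  finally show ?thesis
    using repr_independence[of "a \<otimes> b" N "b \<otimes> a"] a b normal_imp_subgroup[OF N] by simp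
qed

section \<open>Clifford theory over an abelian quotient\<close>

locale clifford_setting = group G for G (structure) +
  fixes N :: "'a set" and \<eta> :: "'a \<Rightarrow> 'k::field_char_0"
  assumes finite_carrier: "finite (carrier G)"
    and splitting_field: "\<And>H. subgroup H G \<Longrightarrow> splitting_field TYPE('k) (G\<lparr>carrier := H\<rparr>)"
    and N_normal: "N \<lhd> G" and derived_subset_N: "derived G (carrier G) \<subseteq> N"
    and eta_irr: "irr_char (G\<lparr>carrier := N\<rparr>) \<eta>"
begin

abbreviation "T \<equiv> inertia G N \<eta>"
abbreviation "G\<^sub>T \<equiv> G\<lparr>carrier := T\<rparr>"
abbreviation "G\<^sub>N \<equiv> G\<lparr>carrier := N\<rparr>"
abbreviation "Q \<equiv> G\<^sub>T Mod N"

lemma N_subgroup: "subgroup N G"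
  using N_normal by (rule normal_imp_subgroup)

lemma N_subset: "N \<subseteq> carrier G"
  using N_subgroup by (rule subgroup.subset)

lemma T_subgroup: "subgroup T G"
  using N_normal by (rule inertia_subgroup)

lemma T_subset: "T \<subseteq> carrier G"
  using T_subgroup by (rule subgroup.subset)

lemma eta_conj:
  assumes "n \<in> N" "x \<in> N"
  shows "\<eta> (inv n \<otimes> x \<otimes> n) = \<eta> x"
proof -
  obtain d \<rho> where irr: "irr_rep G\<^sub>N d \<rho>" and \<eta>: "\<eta> = char_of G\<^sub>N \<rho>"
    using eta_irr unfolding irr_char_def by auto
  have "is_rep G\<^sub>N d \<rho>" using irr unfolding irr_rep_def by simp
  then have "char_of G\<^sub>N \<rho> (inv\<^bsub>G\<^sub>N\<^esub> n \<otimes>\<^bsub>G\<^sub>N\<^esub> x \<otimes>\<^bsub>G\<^sub>N\<^esub> n) = char_of G\<^sub>N \<rho> x"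
    using char_of_conj[OF subgroup_imp_group[OF N_subgroup]] assms by simp
  then show ?thesis using assms N_subgroup \<eta> by simp
qed

lemma N_subset_T: "N \<subseteq> T"
  unfolding inertia_def using N_subset eta_conj by auto

lemma N_normal_T: "N \<lhd> G\<^sub>T"
  using normal_restrict_supergroup[OF T_subgroup N_normal N_subset_T] .

lemma N_subgroup_T: "subgroup N G\<^sub>T"
  using N_normal_T by (rule normal_imp_subgroup)

lemma group_T: "group G\<^sub>T"
  using T_subgroup by (rule subgroup_imp_group)

lemma group_Q: "group Q"
  using N_normal_T by (rule normal.factorgroup_is_group)

lemma finite_N: "finite N"
  using finite_carrier N_subset by (rule finite_subset[rotated])

lemma finite_T: "finite T"
  using finite_carrier T_subset by (rule finite_subset[rotated])

lemma inv_T [simp]: "x \<in> T \<Longrightarrow> inv\<^bsub>G\<^sub>T\<^esub> x = inv x"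
  using T_subgroup by simp

lemma inv_N [simp]: "x \<in> N \<Longrightarrow> inv\<^bsub>G\<^sub>N\<^esub> x = inv x"
  using N_subgroup by simp

lemma carrier_Q: "carrier Q = (\<lambda>a. N #> a) ` T"
  by (simp add: carrier_FactGroup)

lemma finite_Q: "finite (carrier Q)"
  unfolding carrier_Q using finite_T by simp

lemma r_coset_in_Q: "g \<in> T \<Longrightarrow> N #> g \<in> carrier Q"
  using carrier_Q by auto

lemma mult_Q: "a \<in> T \<Longrightarrow> b \<in> T \<Longrightarrow> (N #> a) \<otimes>\<^bsub>Q\<^esub> (N #> b) = N #> (a \<otimes> b)"
  using normal.rcos_sum[OF N_normal_T, of a b] by simp

lemma r_coset_eq_N_iff:
  assumes "g \<in> T"
  shows "N #> g = N \<longleftrightarrow> g \<in> N"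
proof
  assume "N #> g = N"
  then show "g \<in> N" using group.rcos_self[OF group_T _ N_subgroup_T, of g] assms by simp
next
  assume "g \<in> N"
  then show "N #> g = N" by (rule subgroup.rcos_const[OF N_subgroup is_group])
qed

lemma card_Q_mult_card_N: "card (carrier Q) * card N = card T"
  using group.lagrange[OF group_T N_subgroup_T] unfolding Coset.order_def FactGroup_def by simp

lemma card_N_pos: "card N > 0"
  using finite_subset[OF N_subset finite_carrier] subgroup.one_closed[OF N_subgroup] card_gt_0_iff
    by blast

lemma card_T_pos: "card T > 0"
  using finite_T subgroup.one_closed[OF T_subgroup] card_gt_0_iff by blast

lemma index_N_T: "of_nat (card T) / of_nat (card N) = (of_nat (card (carrier Q)) :: 'k)"
  using card_Q_mult_card_N card_N_pos by (simp add: field_simps flip: of_nat_mult)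

lemma Q_mult_comm:
  assumes "a \<in> carrier Q" "b \<in> carrier Q"
  shows "a \<otimes>\<^bsub>Q\<^esub> b = b \<otimes>\<^bsub>Q\<^esub> a"
proof -
  obtain x y where xy: "x \<in> T" "y \<in> T" and "a = N #> x" "b = N #> y" using assms carrier_Q by auto
  then show ?thesis
    using mult_Q[OF xy] mult_Q[OF xy(2,1)] rcos_mult_comm_of_derived[OF N_normal derived_subset_N]
      xy T_subset
    by (simp add: subset_iff)
qed

lemma eta_one_nonzero: "\<eta> \<one> \<noteq> 0"
proof -
  obtain d \<rho> where irr: "irr_rep G\<^sub>N d \<rho>" and \<eta>: "\<eta> = char_of G\<^sub>N \<rho>"
    using eta_irr unfolding irr_char_def by auto
  then have "\<rho> \<one> = 1\<^sub>m d" and "d > 0" unfolding irr_rep_def is_rep_def by auto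
  then show ?thesis using subgroup.one_closed[OF N_subgroup] unfolding \<eta> char_of_def mat_tr_def by simp
qed

lemma irr_rep_inflate:
  fixes w :: "'a set \<Rightarrow> 'k mat"
  assumes irr: "irr_rep Q d w"
  shows "irr_rep G\<^sub>T d (\<lambda>g. w (N #> g))"
proof -
  have rep: "is_rep Q d w" using irr unfolding irr_rep_def by auto
  have "is_rep G\<^sub>T d (\<lambda>g. w (N #> g))"
    unfolding is_rep_def
  proof (intro conjI ballI)
    fix g assume "g \<in> carrier G\<^sub>T"
    then show "w (N #> g) \<in> carrier_mat d d" using is_rep_carrier[OF rep r_coset_in_Q] by simp
  next
    fix g h assume "g \<in> carrier G\<^sub>T" "h \<in> carrier G\<^sub>T"
    then have g: "g \<in> T" and h: "h \<in> T" by auto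
    show "w (N #> (g \<otimes>\<^bsub>G\<^sub>T\<^esub> h)) = w (N #> g) * w (N #> h)"
      using is_rep_mult[OF rep r_coset_in_Q[OF g] r_coset_in_Q[OF h]] mult_Q[OF g h] by simp
  next
    have "N #> \<one> = N" using N_subset by simp
    then show "w (N #> \<one>\<^bsub>G\<^sub>T\<^esub>) = 1\<^sub>m d" using is_rep_one[OF rep] by simp
  qed
  moreover have "rep_invariant_subspace Q d w W"
    if "rep_invariant_subspace G\<^sub>T d (\<lambda>g. w (N #> g)) W" for W
    using that unfolding rep_invariant_subspace_def carrier_Q by auto
  ultimately show ?thesis using irr unfolding irr_rep_def by blast
qed

lemma irr_rep_Q_degree_one:
  fixes w :: "'a set \<Rightarrow> 'k mat"
  assumes irr: "irr_rep Q d w"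
  shows "d = 1"
proof (rule irr_rep_commuting_degree_one[OF splitting_field[OF T_subgroup] irr_rep_inflate[OF irr]])
  have rep: "is_rep Q d w" using irr unfolding irr_rep_def by auto
  fix g h assume "g \<in> carrier G\<^sub>T" "h \<in> carrier G\<^sub>T"
  then have g: "N #> g \<in> carrier Q" and h: "N #> h \<in> carrier Q" using r_coset_in_Q by auto
  show "w (N #> g) * w (N #> h) = w (N #> h) * w (N #> g)"
    using is_rep_mult[OF rep g h] is_rep_mult[OF rep h g] Q_mult_comm[OF g h] by simp
qed

lemma irr_char_Q_linear:
  fixes \<omega> :: "'a set \<Rightarrow> 'k"
  assumes "irr_char Q \<omega>"
  obtains w where "is_rep Q 1 w" "\<omega> = char_of Q w"
  using assms irr_rep_Q_degree_one unfolding irr_char_def irr_rep_def by metis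

lemma irr_char_Q_multiplicative:
  fixes \<omega> :: "'a set \<Rightarrow> 'k"
  assumes "irr_char Q \<omega>"
  shows "\<And>g h. g \<in> T \<Longrightarrow> h \<in> T \<Longrightarrow> \<omega> (N #> (g \<otimes> h)) = \<omega> (N #> g) * \<omega> (N #> h)"
    and "\<omega> N = 1"
proof -
  obtain w where rep: "is_rep Q 1 w" and \<omega>: "\<omega> = char_of Q w" using irr_char_Q_linear[OF assms] .
  note lin = char_of_degree_one[OF group_Q rep]
  show "\<omega> (N #> (g \<otimes> h)) = \<omega> (N #> g) * \<omega> (N #> h)" if "g \<in> T" "h \<in> T" for g h
    using lin(2)[OF r_coset_in_Q r_coset_in_Q] mult_Q that unfolding \<omega> by simp
  show "\<omega> N = 1" using lin(3) unfolding \<omega> by simp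
qed

lemma inflate_irr_char_Q_on_N:
  fixes \<omega> :: "'a set \<Rightarrow> 'k"
  assumes "irr_char Q \<omega>" and "g \<in> N"
  shows "inflate G T N \<omega> g = 1"
proof -
  have "N #> g = N" using assms(2) N_subset_T r_coset_eq_N_iff by blast
  then show ?thesis
    using assms irr_char_Q_multiplicative(2)[OF assms(1)] N_subset_T unfolding inflate_def by auto
qed

lemma irr_char_twist:
  fixes \<omega> :: "'a set \<Rightarrow> 'k"
  assumes \<psi>: "irr_char G\<^sub>T \<psi>" and \<omega>: "irr_char Q \<omega>"
  shows "irr_char G\<^sub>T (\<lambda>g. \<psi> g * inflate G T N \<omega> g)"
proof -
  obtain n \<rho> where irr: "irr_rep G\<^sub>T n \<rho>" and \<psi>_eq: "\<psi> = char_of G\<^sub>T \<rho>"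
    using \<psi> unfolding irr_char_def by auto
  define f where "f g = \<omega> (N #> g)" for g
  note f_mult = irr_char_Q_multiplicative(1)[OF \<omega>, folded f_def]
  have f_one: "f \<one> = 1" unfolding f_def using irr_char_Q_multiplicative(2)[OF \<omega>] N_subset by simp
  have "f g \<noteq> 0" if g: "g \<in> T" for g
  proof
    assume "f g = 0"
    then have "f (g \<otimes> inv g) = 0" using f_mult[OF g subgroup.m_inv_closed[OF T_subgroup g]] by simp
    then show False using f_one g T_subset by auto
  qed
  then have "irr_rep G\<^sub>T n (\<lambda>g. f g \<cdot>\<^sub>m \<rho> g)"
    using irr_rep_scale[OF irr, of f] f_mult f_one by simp
  moreover have "char_of G\<^sub>T (\<lambda>g. f g \<cdot>\<^sub>m \<rho> g) = (\<lambda>g. \<psi> g * inflate G T N \<omega> g)"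
  proof
    have rep: "is_rep G\<^sub>T n \<rho>" using irr unfolding irr_rep_def by simp
    fix g show "char_of G\<^sub>T (\<lambda>g. f g \<cdot>\<^sub>m \<rho> g) g = \<psi> g * inflate G T N \<omega> g"
      using mat_tr_smult[OF is_rep_carrier[OF rep]] unfolding \<psi>_eq char_of_def inflate_def f_def
      by (simp add: mult.commute)
  qed
  ultimately show ?thesis unfolding irr_char_def by metis
qed

lemma irr_char_orthonormal_N:
  fixes \<chi> \<chi>' :: "'a \<Rightarrow> 'k"
  shows "irr_char G\<^sub>N \<chi> \<Longrightarrow> irr_char G\<^sub>N \<chi>' \<Longrightarrow> char_inner G\<^sub>N \<chi> \<chi>' = (if \<chi> = \<chi>' then 1 else 0)"
  using irr_char_orthonormal[OF subgroup_imp_group[OF N_subgroup] _ splitting_field[OF N_subgroup]]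
    finite_N
  by simp

lemma irr_char_orthonormal_T:
  fixes \<chi> \<chi>' :: "'a \<Rightarrow> 'k"
  shows "irr_char G\<^sub>T \<chi> \<Longrightarrow> irr_char G\<^sub>T \<chi>' \<Longrightarrow> char_inner G\<^sub>T \<chi> \<chi>' = (if \<chi> = \<chi>' then 1 else 0)"
  using irr_char_orthonormal[OF group_T _ splitting_field[OF T_subgroup]] finite_T
  by simp

lemma char_inner_eta_multiples:
  "char_inner G\<^sub>N (\<lambda>g. of_nat a * \<eta> g) (\<lambda>g. of_nat b * \<eta> g) = of_nat (a * b)"
  using irr_char_orthonormal_N[OF eta_irr eta_irr]
    by (simp add: char_inner_scale_left char_inner_scale_right)

lemma ind_char_eta:
  "ind_char G\<^sub>T N \<eta> = (\<lambda>g. if g \<in> N then of_nat (card (carrier Q)) * \<eta> g else 0)"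
proof
  fix g
  let ?c = "\<lambda>x. inv\<^bsub>G\<^sub>T\<^esub> x \<otimes>\<^bsub>G\<^sub>T\<^esub> g \<otimes>\<^bsub>G\<^sub>T\<^esub> x"
  have summand: "(if ?c x \<in> N then \<eta> (?c x) else 0) = (if g \<in> N then \<eta> g else 0)"
    if x: "x \<in> T" and g: "g \<in> T" for x
  proof -
    have "?c x = inv x \<otimes> g \<otimes> x" using x by simp
    moreover have "inv x \<otimes> g \<otimes> x \<in> N \<longleftrightarrow> g \<in> N" using normal_conj_mem_iff[OF N_normal] x g T_subset
      by blast
    moreover have "\<eta> (inv x \<otimes> g \<otimes> x) = \<eta> g" if "g \<in> N" using x that unfolding inertia_def by blast
    ultimately show ?thesis by simp
  qed
  have "(\<Sum>x\<in>carrier G\<^sub>T. if ?c x \<in> N then \<eta> (?c x) else 0) =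
      of_nat (card T) * (if g \<in> N then \<eta> g else 0)"
    if "g \<in> T" using summand[OF _ that] by simp
  then show "ind_char G\<^sub>T N \<eta> g = (if g \<in> N then of_nat (card (carrier Q)) * \<eta> g else 0)"
    using N_subset_T unfolding ind_char_def by (auto simp flip: index_N_T)
qed

lemma char_inner_supported_on_N:
  fixes \<phi> :: "'a \<Rightarrow> 'k"
  shows "char_inner G\<^sub>T f (\<lambda>g. if g \<in> N then of_nat (card (carrier Q)) * \<phi> g else 0) = char_inner G\<^sub>N f \<phi>"
proof -
  let ?q = "of_nat (card (carrier Q)) :: 'k"
  have "(\<Sum>g\<in>T. f g * (if inv\<^bsub>G\<^sub>T\<^esub> g \<in> N then ?q * \<phi> (inv\<^bsub>G\<^sub>T\<^esub> g :: 'a) else 0)) =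
      (\<Sum>g\<in>T. if g \<in> N then ?q * (f g * \<phi> (inv g)) else 0)"
  proof (intro sum.cong refl)
    fix g assume "g \<in> T"
    then have "inv g \<in> N \<longleftrightarrow> g \<in> N"
      using subgroup.m_inv_closed[OF N_subgroup, of g] subgroup.m_inv_closed[OF N_subgroup, of "inv g"]
        T_subset
      by auto
    then show "f g * (if inv\<^bsub>G\<^sub>T\<^esub> g \<in> N then ?q * \<phi> (inv\<^bsub>G\<^sub>T\<^esub> g) else 0) =
      (if g \<in> N then ?q * (f g * \<phi> (inv g)) else 0)" using \<open>g \<in> T\<close> by simp
  qed
  also have "\<dots> = ?q * (\<Sum>g\<in>N. f g * \<phi> (inv\<^bsub>G\<^sub>N\<^esub> g))"
    using N_subset_T finite_T by (simp add: sum.If_cases Int_absorb1 sum_distrib_left)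
  moreover have "?q \<noteq> 0" using card_Q_mult_card_N card_T_pos by (metis of_nat_eq_0_iff mult_0 not_less0)
  ultimately show ?thesis
    unfolding char_inner_def using index_N_T card_N_pos by (simp add: field_simps)
qed

lemma char_inner_ind_char_eta: "char_inner G\<^sub>T f (ind_char G\<^sub>T N \<eta>) = char_inner G\<^sub>N f \<eta>"
  unfolding ind_char_eta char_inner_supported_on_N ..

lemma restriction_to_N_irr_chars:
  assumes "irr_char G\<^sub>T \<psi>"
  obtains L where "\<forall>\<theta>\<in>set L. irr_char G\<^sub>N \<theta>" "\<And>g. g \<in> N \<Longrightarrow> \<psi> g = (\<Sum>\<theta>\<leftarrow>L. \<theta> g)"
proof -
  obtain d \<rho> where irr: "irr_rep G\<^sub>T d \<rho>" and \<psi>: "\<psi> = char_of G\<^sub>T \<rho>"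
    using assms unfolding irr_char_def by auto
  have rep: "is_rep G\<^sub>T d \<rho>" using irr unfolding irr_rep_def by simp
  have "is_rep G\<^sub>N d \<rho>" unfolding is_rep_def
    using is_rep_carrier[OF rep] is_rep_mult[OF rep] is_rep_one[OF rep] N_subset_T by auto
  then obtain L where "\<forall>\<theta>\<in>set L. irr_char G\<^sub>N \<theta>" "char_of G\<^sub>N \<rho> = (\<lambda>h. \<Sum>\<theta>\<leftarrow>L. \<theta> h)"
    using char_of_sum_irr_char by blast
  moreover have "\<psi> g = char_of G\<^sub>N \<rho> g" if "g \<in> N" for g
    using that N_subset_T unfolding \<psi> char_of_def by auto
  ultimately show ?thesis using that by auto
qed

end

locale clifford_decomposition = clifford_setting G N \<eta>
  for G (structure) and N :: "'a set" and \<eta> :: "'a \<Rightarrow> 'k::field_char_0" +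
  fixes s :: nat and m :: "nat \<Rightarrow> nat" and \<psi> :: "nat \<Rightarrow> 'a \<Rightarrow> 'k"
  assumes one_le_s: "1 \<le> s" and m_pos: "\<And>i. i \<in> {1..s} \<Longrightarrow> 0 < m i"
    and psi_irr: "\<And>i. i \<in> {1..s} \<Longrightarrow> irr_char G\<^sub>T (\<psi> i)"
    and psi_inj: "inj_on \<psi> {1..s}"
    and ind_char_decomp: "ind_char G\<^sub>T N \<eta> = (\<lambda>g. \<Sum>i=1..s. of_nat (m i) * \<psi> i g)"
begin

lemma one_in_indices: "1 \<in> {1..s}"
  using one_le_s by simp

lemma char_inner_ind_char_eta_irr:
  assumes "irr_char G\<^sub>T \<phi>"
  shows "char_inner G\<^sub>T \<phi> (ind_char G\<^sub>T N \<eta>) = (\<Sum>j=1..s. if \<phi> = \<psi> j then of_nat (m j) else 0)"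
  unfolding ind_char_decomp char_inner_sum_right char_inner_scale_right
  using irr_char_orthonormal_T[OF assms psi_irr] by (intro sum.cong) auto

lemma restriction_constituent_eq_eta:
  assumes L: "\<And>j. j \<in> {1..s} \<Longrightarrow>
      (\<forall>\<theta>\<in>set (L j). irr_char G\<^sub>N \<theta>) \<and> (\<forall>g\<in>N. \<psi> j g = (\<Sum>\<theta>\<leftarrow>L j. \<theta> g))"
    and i: "i \<in> {1..s}" and \<theta>: "\<theta> \<in> set (L i)"
  shows "\<theta> = \<eta>"
proof (rule ccontr)
  assume "\<theta> \<noteq> \<eta>"
  have irr: "irr_char G\<^sub>N \<theta>" using L[OF i] \<theta> by blast
  \<comment> \<open>On \<open>N\<close> the induced character is a multiple of \<open>\<eta>\<close>, hence orthogonal to \<open>\<theta>\<close>,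
    but its inner product with \<open>\<theta>\<close> also counts the occurrences of \<open>\<theta>\<close> in the lists \<open>L j\<close>.\<close>
  let ?F = "\<lambda>g. \<Sum>j=1..s. of_nat (m j) * (\<Sum>\<theta>\<leftarrow>L j. \<theta> g)"
  have "?F g = of_nat (card (carrier Q)) * \<eta> g" if "g \<in> N" for g
    using fun_cong[OF ind_char_decomp, of g] L that unfolding ind_char_eta by simp
  then have "char_inner G\<^sub>N ?F \<theta> = char_inner G\<^sub>N (\<lambda>g. of_nat (card (carrier Q)) * \<eta> g) \<theta>"
    by (intro char_inner_cong[OF subgroup_imp_group[OF N_subgroup]]) simp_all
  also have "\<dots> = of_nat (card (carrier Q)) * char_inner G\<^sub>N \<eta> \<theta>" by (rule char_inner_scale_left)
  also have "\<dots> = 0" using irr_char_orthonormal_N[OF eta_irr irr] \<open>\<theta> \<noteq> \<eta>\<close> by simp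
  finally have "char_inner G\<^sub>N ?F \<theta> = 0" .
  moreover have "char_inner G\<^sub>N ?F \<theta> = of_nat (\<Sum>j=1..s. m j * count_list (L j) \<theta>)"
    unfolding char_inner_sum_left char_inner_scale_left char_inner_sum_list_left[of _ "\<lambda>\<theta>. \<theta>"]
    using L irr irr_char_orthonormal_N by (simp add: sum_list_indicator_eq_count cong: map_cong)
  ultimately have "(of_nat (\<Sum>j=1..s. m j * count_list (L j) \<theta>) :: 'k) = 0" by metis
  then have "(\<Sum>j=1..s. m j * count_list (L j) \<theta>) = 0" by (simp only: of_nat_eq_0_iff)
  then have "m i * count_list (L i) \<theta> = 0" using i by simp
  then show False using m_pos[OF i] \<theta> by (simp add: count_list_0_iff)
qed

lemma psi_on_N_multiple_eta:
  assumes i: "i \<in> {1..s}"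
  obtains c :: nat where "\<And>g. g \<in> N \<Longrightarrow> \<psi> i g = of_nat c * \<eta> g"
proof -
  have "\<forall>j\<in>{1..s}. \<exists>L. (\<forall>\<theta>\<in>set L. irr_char G\<^sub>N \<theta>) \<and> (\<forall>g\<in>N. \<psi> j g = (\<Sum>\<theta>\<leftarrow>L. \<theta> g))"
    using restriction_to_N_irr_chars[OF psi_irr] by metis
  then obtain L where L: "\<And>j. j \<in> {1..s} \<Longrightarrow>
      (\<forall>\<theta>\<in>set (L j). irr_char G\<^sub>N \<theta>) \<and> (\<forall>g\<in>N. \<psi> j g = (\<Sum>\<theta>\<leftarrow>L j. \<theta> g))"
    by metis
  have "\<psi> i g = of_nat (length (L i)) * \<eta> g" if "g \<in> N" for g
  proof -
    have "(\<Sum>\<theta>\<leftarrow>L i. \<theta> g) = (\<Sum>\<theta>\<leftarrow>L i. \<eta> g)"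
      using restriction_constituent_eq_eta[OF L i] by (intro arg_cong[where f = sum_list] map_cong) auto
    then show ?thesis using L[OF i] that by (simp add: sum_list_triv)
  qed
  then show ?thesis using that by blast
qed

lemma char_inner_psi_ind_char_eta:
  assumes i: "i \<in> {1..s}"
  shows "char_inner G\<^sub>T (\<psi> i) (ind_char G\<^sub>T N \<eta>) = of_nat (m i)"
proof -
  have "(\<Sum>j=1..s. if \<psi> i = \<psi> j then of_nat (m j) else 0) =
      (\<Sum>j=1..s. if j = i then of_nat (m j) else (0::'k))"
    using inj_on_eq_iff[OF psi_inj i] by (intro sum.cong) auto
  then show ?thesis using i by (simp add: char_inner_ind_char_eta_irr[OF psi_irr[OF i]])
qed

lemma psi_on_N:
  assumes i: "i \<in> {1..s}" and g: "g \<in> N"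
  shows "\<psi> i g = of_nat (m i) * \<eta> g"
proof -
  obtain c :: nat where c: "\<And>g. g \<in> N \<Longrightarrow> \<psi> i g = of_nat c * \<eta> g"
    using psi_on_N_multiple_eta[OF i] by blast
  have "(of_nat (m i) :: 'k) = char_inner G\<^sub>N (\<psi> i) \<eta>"
    using char_inner_psi_ind_char_eta[OF i] unfolding char_inner_ind_char_eta by simp
  also have "\<dots> = char_inner G\<^sub>N (\<lambda>g. of_nat c * \<eta> g) (\<lambda>g. of_nat 1 * \<eta> g)"
    using c by (intro char_inner_cong[OF subgroup_imp_group[OF N_subgroup]]) simp_all
  finally have "m i = c" unfolding char_inner_eta_multiples by simp
  then show ?thesis using c[OF g] by simp
qed

lemma twist_mem_decomposition:
  assumes \<omega>: "irr_char Q \<omega>"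
  shows "\<exists>i\<in>{1..s}. \<psi> i = (\<lambda>g. \<psi> 1 g * inflate G T N \<omega> g)"
proof (rule ccontr)
  let ?\<phi> = "\<lambda>g. \<psi> 1 g * inflate G T N \<omega> g"
  assume "\<not> (\<exists>i\<in>{1..s}. \<psi> i = ?\<phi>)"
  then have "char_inner G\<^sub>T ?\<phi> (ind_char G\<^sub>T N \<eta>) = 0"
    unfolding char_inner_ind_char_eta_irr[OF irr_char_twist[OF psi_irr[OF one_in_indices] \<omega>]]
    by (intro sum.neutral) auto
  moreover have "char_inner G\<^sub>T ?\<phi> (ind_char G\<^sub>T N \<eta>) =
      char_inner G\<^sub>N (\<lambda>g. of_nat (m 1) * \<eta> g) (\<lambda>g. of_nat 1 * \<eta> g)"
    unfolding char_inner_ind_char_eta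
    using psi_on_N[OF one_in_indices] inflate_irr_char_Q_on_N[OF \<omega>]
    by (intro char_inner_cong[OF subgroup_imp_group[OF N_subgroup]]) simp_all
  ultimately show False using m_pos[OF one_in_indices] unfolding char_inner_eta_multiples by simp
qed

lemma psi_eq_twist:
  assumes i: "i \<in> {1..s}"
  shows "\<exists>\<omega>. irr_char Q \<omega> \<and> \<psi> i = (\<lambda>g. \<psi> 1 g * inflate G T N \<omega> g)"
proof -
  obtain xs :: "('a set \<Rightarrow> 'k) list" where xs: "\<forall>\<omega>\<in>set xs. irr_char Q \<omega>"
    and reg: "\<And>a. a \<in> carrier Q \<Longrightarrow> (\<Sum>\<omega>\<leftarrow>xs. \<omega> a) = (if a = \<one>\<^bsub>Q\<^esub> then of_nat (card (carrier Q)) else 0)"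
    using group.regular_char_decomposition[OF group_Q finite_Q] by blast
  let ?P = "\<lambda>g. \<Sum>\<omega>\<leftarrow>xs. \<psi> 1 g * inflate G T N \<omega> g"
  have "?P g = (if g \<in> N then of_nat (card (carrier Q)) * \<psi> 1 g else 0)" for g
  proof (cases "g \<in> T")
    case True
    then have "?P g = \<psi> 1 g * (\<Sum>\<omega>\<leftarrow>xs. \<omega> (N #> g))"
      unfolding inflate_def by (simp add: sum_list_const_mult)
    then show ?thesis using reg r_coset_in_Q[OF True] r_coset_eq_N_iff[OF True] by simp
  qed (use N_subset_T in \<open>auto simp: inflate_def\<close>)
  then have "char_inner G\<^sub>T (\<psi> i) ?P = char_inner G\<^sub>N (\<psi> i) (\<psi> 1)"
    by (simp add: char_inner_supported_on_N)
  also have "\<dots> = char_inner G\<^sub>N (\<lambda>g. of_nat (m i) * \<eta> g) (\<lambda>g. of_nat (m 1) * \<eta> g)"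
    using psi_on_N[OF i] psi_on_N[OF one_in_indices]
    by (intro char_inner_cong[OF subgroup_imp_group[OF N_subgroup]]) simp_all
  finally have "char_inner G\<^sub>T (\<psi> i) ?P \<noteq> 0"
    using m_pos[OF i] m_pos[OF one_in_indices] unfolding char_inner_eta_multiples by simp
  moreover have "char_inner G\<^sub>T (\<psi> i) ?P =
      (\<Sum>\<omega>\<leftarrow>xs. if \<psi> i = (\<lambda>g. \<psi> 1 g * inflate G T N \<omega> g) then 1 else 0)"
    unfolding char_inner_sum_list_right
  proof (intro arg_cong[where f = sum_list] map_cong refl)
    fix \<omega> assume "\<omega> \<in> set xs"
    then have "irr_char Q \<omega>" using xs by blast
    from irr_char_orthonormal_T[OF psi_irr[OF i] irr_char_twist[OF psi_irr[OF one_in_indices] this]]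
    show "char_inner G\<^sub>T (\<psi> i) (\<lambda>g. \<psi> 1 g * inflate G T N \<omega> g) =
      (if \<psi> i = (\<lambda>g. \<psi> 1 g * inflate G T N \<omega> g) then 1 else 0)" .
  qed
  ultimately obtain \<omega> where "\<omega> \<in> set xs" "\<psi> i = (\<lambda>g. \<psi> 1 g * inflate G T N \<omega> g)"
    using sum_list_indicator_nonzero[of "\<lambda>\<omega>. \<psi> i = (\<lambda>g. \<psi> 1 g * inflate G T N \<omega> g)" xs] by auto
  then show ?thesis using xs by blast
qed

lemma m_eq_m1:
  assumes i: "i \<in> {1..s}"
  shows "m i = m 1"
proof -
  obtain \<omega> where \<omega>: "irr_char Q \<omega>" and \<psi>_i: "\<psi> i = (\<lambda>g. \<psi> 1 g * inflate G T N \<omega> g)"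
    using psi_eq_twist[OF i] by blast
  have one: "\<one> \<in> N" using subgroup.one_closed[OF N_subgroup] .
  have "\<psi> i \<one> = \<psi> 1 \<one>" using \<psi>_i inflate_irr_char_Q_on_N[OF \<omega> one] by simp
  then have "(of_nat (m i) :: 'k) * \<eta> \<one> = of_nat (m 1) * \<eta> \<one>"
    using psi_on_N[OF i one] psi_on_N[OF one_in_indices one] by simp
  then show ?thesis using eta_one_nonzero by simp
qed

lemma card_Q_eq: "card (carrier Q) = s * (m 1)\<^sup>2"
proof -
  have one: "\<one> \<in> N" using subgroup.one_closed[OF N_subgroup] .
  have "of_nat (card (carrier Q)) * \<eta> \<one> = (\<Sum>i=1..s. of_nat (m i) * \<psi> i \<one>)"
    using fun_cong[OF ind_char_decomp, of \<one>] one unfolding ind_char_eta by simp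
  also have "\<dots> = (\<Sum>i=1..s. of_nat (m 1 * m 1) * \<eta> \<one>)"
  proof (intro sum.cong refl)
    fix i assume i: "i \<in> {1..s}"
    show "of_nat (m i) * \<psi> i \<one> = of_nat (m 1 * m 1) * \<eta> \<one>"
      unfolding psi_on_N[OF i one] m_eq_m1[OF i] by simp
  qed
  also have "\<dots> = of_nat (s * (m 1)\<^sup>2) * \<eta> \<one>" by (simp add: power2_eq_square)
  finally show ?thesis using eta_one_nonzero by (metis mult_cancel_right of_nat_eq_iff)
qed

end

theorem proposition2p3:
  fixes G :: "('g, 'b) monoid_scheme"
    and N :: "'g set"
    and \<chi> \<eta> :: "'g \<Rightarrow> 'k::field_char_0"
    and s :: nat and m :: "nat \<Rightarrow> nat" and \<psi> :: "nat \<Rightarrow> 'g \<Rightarrow> 'k"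
  assumes "group G" and "finite (carrier G)"
    and "\<And>H. subgroup H G \<Longrightarrow> splitting_field TYPE('k) (G\<lparr>carrier := H\<rparr>)"
    and "N \<lhd> G" and "derived G (carrier G) \<subseteq> N"
    and "irr_char G \<chi>"
    and "irr_char (G\<lparr>carrier := N\<rparr>) \<eta>"
    and "constituent (G\<lparr>carrier := N\<rparr>) \<eta> (res_char N \<chi>)"
    and "1 \<le> s"
    and "\<And>i. i \<in> {1..s} \<Longrightarrow> m i > 0"
    and "\<And>i. i \<in> {1..s} \<Longrightarrow> irr_char (G\<lparr>carrier := inertia G N \<eta>\<rparr>) (\<psi> i)"
    and "inj_on \<psi> {1..s}"
    and "ind_char (G\<lparr>carrier := inertia G N \<eta>\<rparr>) N \<eta> = (\<lambda>g. \<Sum>i=1..s. of_nat (m i) * \<psi> i g)"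
    and "ind_char G (inertia G N \<eta>) (\<psi> 1) = \<chi>"
  shows "(\<forall>i\<in>{1..s}. \<exists>\<omega>. irr_char (G\<lparr>carrier := inertia G N \<eta>\<rparr> Mod N) \<omega> \<and>
            \<psi> i = (\<lambda>g. \<psi> 1 g * inflate G (inertia G N \<eta>) N \<omega> g))
       \<and> (\<forall>\<omega>. irr_char (G\<lparr>carrier := inertia G N \<eta>\<rparr> Mod N) \<omega> \<longrightarrow>
            (\<exists>i\<in>{1..s}. \<psi> i = (\<lambda>g. \<psi> 1 g * inflate G (inertia G N \<eta>) N \<omega> g)))
       \<and> (\<forall>i\<in>{1..s}. m i = m 1)
       \<and> card (carrier (G\<lparr>carrier := inertia G N \<eta>\<rparr> Mod N)) = s * (m 1)^2"
proof -
  \<comment> \<open>The hypotheses on \<open>\<chi>\<close> only fix which constituent is called \<open>\<psi> 1\<close>; the argument works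
    for any of them.\<close>
  interpret clifford_decomposition G N \<eta> s m \<psi>
    using assms
    by (intro clifford_decomposition.intro clifford_setting.intro clifford_setting_axioms.intro
        clifford_decomposition_axioms.intro) auto
  show ?thesis using psi_eq_twist twist_mem_decomposition m_eq_m1 card_Q_eq by blast
qed

end
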